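(* Let $w\in\mathbb{R}^N_{>0}$, $R\ge2$, $1\le K\le R$, assume $\mu_i\ge1$ for all $i$, and let $\nu=w^{-1}\odot\big(\frac{K-1}{R-1}\mu+\frac{R-K}{R-1}\mathbf{1}\big)$. Consider Algorithm 6: initialize $y^{(0)}\in\mathcal{B}$; at each iteration $k$ draw $C_{i_k}\subseteq[R]$ uniformly at random among subsets of size $K$, independently of the past; for $r\in C_{i_k}$ set $y^{(k+1)}_r=\Pi_{\mathcal{B}_r,\nu}\big(y^{(k)}_r-\nu^{-1}\odot\nabla_rg_w(y^{(k)})\big)$, and $y^{(k+1)}_r=y^{(k)}_r$ for $r\notin C_{i_k}$. Let $g_w^*=\min_{y\in\mathcal{B}}g_w(y)$. Then for all $k\ge0$, $$\mathbb{E}\Big[g_w(y^{(k)})-g_w^*+\tfrac12d^2_{I(\nu)}(y^{(k)},\Xi_w)\Big]\le\Big[1-\frac{4K}{R(\|w\|_1\|\nu\|_1+2)}\Big]^k\Big[g_w(y^{(0)})-g_w^*+\tfrac12d^2_{I(\nu)}(y^{(0)},\Xi_w)\Big].$$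
   Context: $F_r:2^{[N]}\to\mathbb{R}$ ($r\in[R]$) are submodular with $F_r(\emptyset)=0$, base polytopes $\mathcal{B}_r=\{u\in\mathbb{R}^N:\sum_{i\in S}u_i\le F_r(S)\ \forall S,\ \sum_iu_i=F_r([N])\}$; $\mathcal{B}=\mathcal{B}_1\times\cdots\times\mathcal{B}_R$; $A:(\mathbb{R}^N)^R\to\mathbb{R}^N$, $Ay=\sum_ry_r$. $g_w(y)=\frac12\|Ay\|^2_{2,w^{-1}}$, with block gradient $\nabla_rg_w(y)=w^{-1}\odot Ay$. $S_r$ is the set of $i$ with $F_r(S\cup\{i\})\ne F_r(S)$ for some $S\subseteq[N]\setminus\{i\}$; $\mu_i=|\{r:i\in S_r\}|$; $\mathbf{1}$ is the all-ones vector. $\Xi_w$ is the set of minimizers of $g_w$ over $\mathcal{B}$. Powers, inverses and $\odot$ are element-wise; $\|z\|_{2,v}=\sqrt{\sum_iv_iz_i^2}$; $\Pi_{\Omega,v}(u)=\arg\min_{z\in\Omega}\|z-u\|_{2,v}$; $I(v)$ has all $R$ blocks equal to $v$; $\|y\|_{2,\theta}=\sqrt{\sum_r\|y_r\|^2_{2,\theta_r}}$; $d_\theta(y,\mathcal{K})=\min_{z\in\mathcal{K}}\|y-z\|_{2,\theta}$. *)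

theory Defs
  imports "HOL-Analysis.Analysis" "HOL-Probability.Probability"
begin

text \<open>Coordinates [N] are the finite type 'n (N = CARD('n)); blocks r are naturals r < R.
  A point of (R^N)^R is y :: nat => 'n => real, with y r = 0 for r >= R on the feasible set.\<close>

definition submodular :: "('n set \<Rightarrow> real) \<Rightarrow> bool" where
  "submodular F \<longleftrightarrow> (\<forall>A B. F (A \<union> B) + F (A \<inter> B) \<le> F A + F B)"

definition base_polytope :: "('n::finite set \<Rightarrow> real) \<Rightarrow> ('n \<Rightarrow> real) set" where
  "base_polytope F = {u. (\<forall>S. (\<Sum>i\<in>S. u i) \<le> F S) \<and> (\<Sum>i\<in>UNIV. u i) = F UNIV}"

definition prod_base :: "nat \<Rightarrow> (nat \<Rightarrow> 'n::finite set \<Rightarrow> real) \<Rightarrow> (nat \<Rightarrow> 'n \<Rightarrow> real) set" where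
  "prod_base R F = {y. (\<forall>r<R. y r \<in> base_polytope (F r)) \<and> (\<forall>r\<ge>R. y r = (\<lambda>_. 0))}"

definition Aop :: "nat \<Rightarrow> (nat \<Rightarrow> 'n \<Rightarrow> real) \<Rightarrow> 'n \<Rightarrow> real" where
  "Aop R y = (\<lambda>i. \<Sum>r<R. y r i)"

definition wnorm :: "('n::finite \<Rightarrow> real) \<Rightarrow> ('n \<Rightarrow> real) \<Rightarrow> real" where
  "wnorm v z = sqrt (\<Sum>i\<in>UNIV. v i * (z i)\<^sup>2)"

definition g_w :: "nat \<Rightarrow> ('n::finite \<Rightarrow> real) \<Rightarrow> (nat \<Rightarrow> 'n \<Rightarrow> real) \<Rightarrow> real" where
  "g_w R w y = (1/2) * (wnorm (\<lambda>i. inverse (w i)) (Aop R y))\<^sup>2"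

definition grad_r :: "nat \<Rightarrow> ('n::finite \<Rightarrow> real) \<Rightarrow> (nat \<Rightarrow> 'n \<Rightarrow> real) \<Rightarrow> 'n \<Rightarrow> real" where
  "grad_r R w y = (\<lambda>i. inverse (w i) * Aop R y i)"

definition support_set :: "('n set \<Rightarrow> real) \<Rightarrow> 'n set" where
  "support_set F = {i. \<exists>S. i \<notin> S \<and> F (insert i S) \<noteq> F S}"

definition mu :: "nat \<Rightarrow> (nat \<Rightarrow> 'n set \<Rightarrow> real) \<Rightarrow> 'n \<Rightarrow> nat" where
  "mu R F i = card {r. r < R \<and> i \<in> support_set (F r)}"

definition wproj :: "('n::finite \<Rightarrow> real) set \<Rightarrow> ('n \<Rightarrow> real) \<Rightarrow> ('n \<Rightarrow> real) \<Rightarrow> 'n \<Rightarrow> real" where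
  "wproj \<Omega> v u = (SOME z. z \<in> \<Omega> \<and> (\<forall>z'\<in>\<Omega>. wnorm v (\<lambda>i. z i - u i) \<le> wnorm v (\<lambda>i. z' i - u i)))"

definition g_star :: "nat \<Rightarrow> (nat \<Rightarrow> 'n::finite set \<Rightarrow> real) \<Rightarrow> ('n \<Rightarrow> real) \<Rightarrow> real" where
  "g_star R F w = (INF y\<in>prod_base R F. g_w R w y)"

definition Xi :: "nat \<Rightarrow> (nat \<Rightarrow> 'n::finite set \<Rightarrow> real) \<Rightarrow> ('n \<Rightarrow> real) \<Rightarrow> (nat \<Rightarrow> 'n \<Rightarrow> real) set" where
  "Xi R F w = {y \<in> prod_base R F. \<forall>z\<in>prod_base R F. g_w R w y \<le> g_w R w z}"

definition blk_norm :: "nat \<Rightarrow> ('n::finite \<Rightarrow> real) \<Rightarrow> (nat \<Rightarrow> 'n \<Rightarrow> real) \<Rightarrow> real" where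
  "blk_norm R v y = sqrt (\<Sum>r<R. (wnorm v (y r))\<^sup>2)"

definition blk_dist :: "nat \<Rightarrow> ('n::finite \<Rightarrow> real) \<Rightarrow> (nat \<Rightarrow> 'n \<Rightarrow> real) \<Rightarrow> (nat \<Rightarrow> 'n \<Rightarrow> real) set \<Rightarrow> real" where
  "blk_dist R v y K = (INF z\<in>K. blk_norm R v (\<lambda>r i. y r i - z r i))"

definition alg_step :: "nat \<Rightarrow> (nat \<Rightarrow> 'n::finite set \<Rightarrow> real) \<Rightarrow> ('n \<Rightarrow> real) \<Rightarrow> ('n \<Rightarrow> real)
    \<Rightarrow> nat set \<Rightarrow> (nat \<Rightarrow> 'n \<Rightarrow> real) \<Rightarrow> (nat \<Rightarrow> 'n \<Rightarrow> real)" where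
  "alg_step R F w \<nu> C y = (\<lambda>r. if r \<in> C then
       wproj (base_polytope (F r)) \<nu> (\<lambda>i. y r i - inverse (\<nu> i) * grad_r R w y i)
     else y r)"

definition alg_iter :: "nat \<Rightarrow> (nat \<Rightarrow> 'n::finite set \<Rightarrow> real) \<Rightarrow> ('n \<Rightarrow> real) \<Rightarrow> ('n \<Rightarrow> real)
    \<Rightarrow> (nat \<Rightarrow> 'n \<Rightarrow> real) \<Rightarrow> nat set list \<Rightarrow> (nat \<Rightarrow> 'n \<Rightarrow> real)" where
  "alg_iter R F w \<nu> y0 Cs = foldl (\<lambda>y C. alg_step R F w \<nu> C y) y0 Cs"

text \<open>K-subsets of [R], and sequences of k independent uniform draws from them.\<close>
definition Ksubsets :: "nat \<Rightarrow> nat \<Rightarrow> nat set set" where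
  "Ksubsets R K = {C. C \<subseteq> {..<R} \<and> card C = K}"

definition draw_seqs :: "nat \<Rightarrow> nat \<Rightarrow> nat \<Rightarrow> nat set list set" where
  "draw_seqs R K k = {Cs. length Cs = k \<and> set Cs \<subseteq> Ksubsets R K}"

end

theory Submission
  imports Defs
begin

text \<open>The Lyapunov function \<open>\<Phi> = g\<^sub>w - g\<^sub>w\<^sup>* + d\<^sup>2/2\<close> contracts in expectation at every step, by
  three estimates. First, an expected separable overapproximation: updating a uniformly random
  set of \<open>K\<close> blocks moves coordinate \<open>i\<close> of \<open>Ay\<close> only through the \<open>\<mu>\<^sub>i\<close> blocks whose support
  contains \<open>i\<close>, so by Cauchy--Schwarz the expected value of \<open>g\<^sub>w\<close> after the update is bounded by
  the separable quadratic model with weights \<open>\<nu>\<close>. Second, the three-point inequality of the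
  weighted projection compares this model with a nearest minimizer. Third, an error bound:
  the squared distance from \<open>y \<in> B\<close> to the minimizers is at most \<open>\<parallel>w\<parallel>\<^sub>1 \<parallel>\<nu>\<parallel>\<^sub>1\<close> times the gap
  \<open>g\<^sub>w(y) - g\<^sub>w\<^sup>*\<close>. For this take the point of \<open>B\<close> with the optimal image that is nearest to \<open>y\<close>
  in \<open>\<ell>\<^sub>1\<close>; its exchange graph has no cycles, which forces the excess of each column over \<open>y\<close>
  to be paid for by the difference of the images under \<open>A\<close>.\<close>

section \<open>Base polytopes\<close>

lemma base_polytope_sum_le: "u \<in> base_polytope F \<Longrightarrow> sum u S \<le> F S"
  by (auto simp: base_polytope_def)

lemma base_polytope_sum_UNIV: "u \<in> base_polytope F \<Longrightarrow> sum u UNIV = F UNIV"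
  by (auto simp: base_polytope_def)

lemma base_polytope_le_singleton: "u \<in> base_polytope F \<Longrightarrow> u i \<le> F {i}"
  using base_polytope_sum_le[of u F "{i}"] by simp

lemma base_polytope_ge_compl:
  fixes u :: "'n::finite \<Rightarrow> real"
  assumes "u \<in> base_polytope F"
  shows "F UNIV - F (UNIV - {i}) \<le> u i"
proof -
  have "sum u UNIV = u i + sum u (UNIV - {i})"
    by (metis UNIV_I add.commute finite sum.remove)
  then show ?thesis
    using base_polytope_sum_le[OF assms, of "UNIV - {i}"] base_polytope_sum_UNIV[OF assms] by linarith
qed

lemma base_polytope_zero_outside_support:
  fixes u :: "'n::finite \<Rightarrow> real"
  assumes "u \<in> base_polytope F" "F {} = 0" "i \<notin> support_set F"
  shows "u i = 0"
proof -
  have eq: "\<And>S. i \<notin> S \<Longrightarrow> F (insert i S) = F S"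
    using assms(3) by (auto simp: support_set_def)
  have "F {i} = 0" using eq[of "{}"] assms(2) by simp
  moreover have "F (UNIV - {i}) = F UNIV" using eq[of "UNIV - {i}"] by (simp add: insert_absorb)
  ultimately show ?thesis
    using base_polytope_le_singleton[OF assms(1), of i] base_polytope_ge_compl[OF assms(1), of i] by simp
qed

lemma base_polytope_convex_comb:
  assumes "u \<in> base_polytope F" "v \<in> base_polytope F" "0 \<le> t" "t \<le> 1"
  shows "(\<lambda>i. (1 - t) * u i + t * v i) \<in> base_polytope F"
  unfolding base_polytope_def
proof (intro CollectI conjI allI)
  have sum_eq: "sum (\<lambda>i. (1 - t) * u i + t * v i) S = (1 - t) * sum u S + t * sum v S" for S
    by (simp add: sum.distrib sum_distrib_left)
  fix S
  have "(1 - t) * sum u S + t * sum v S \<le> (1 - t) * F S + t * F S"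
    using assms by (intro add_mono mult_left_mono) (auto simp: base_polytope_def)
  then show "sum (\<lambda>i. (1 - t) * u i + t * v i) S \<le> F S"
    unfolding sum_eq by (simp add: algebra_simps)
  show "sum (\<lambda>i. (1 - t) * u i + t * v i) UNIV = F UNIV"
    using base_polytope_sum_UNIV[OF assms(1)] base_polytope_sum_UNIV[OF assms(2)]
    unfolding sum_eq by (simp add: algebra_simps)
qed

lemma prod_base_convex_comb:
  assumes "y \<in> prod_base R F" "z \<in> prod_base R F" "0 \<le> t" "t \<le> 1"
  shows "(\<lambda>r i. (1 - t) * y r i + t * z r i) \<in> prod_base R F"
  using assms base_polytope_convex_comb[of "y r" "F r" "z r" t for r] unfolding prod_base_def by auto

lemma continuous_on_block_coord: "continuous_on S (\<lambda>y::nat \<Rightarrow> 'n \<Rightarrow> real. y r i)"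
  using continuous_on_product_then_coordinatewise[OF continuous_on_product_coordinates, of r i]
  by (rule continuous_on_subset) simp

lemma closed_base_polytope: "closed (base_polytope (F::'n::finite set \<Rightarrow> real))"
proof -
  have eq: "base_polytope F = (\<Inter>S. {u. sum u S \<le> F S}) \<inter> {u. sum u UNIV = F UNIV}"
    unfolding base_polytope_def by blast
  show ?thesis
    unfolding eq
    by (intro closed_Int closed_INT ballI closed_Collect_le closed_Collect_eq continuous_on_sum
        continuous_on_const continuous_on_product_coordinates)
qed

lemma compact_base_polytope: "compact (base_polytope (F::'n::finite set \<Rightarrow> real))"
proof -
  define box where "box = PiE UNIV (\<lambda>i::'n. {F UNIV - F (UNIV - {i}) .. F {i}})"
  have "compactin (product_topology (\<lambda>_. euclidean) UNIV) box"
    unfolding box_def by (subst compactin_PiE) auto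
  then have "compact box" by (simp add: euclidean_product_topology)
  then have "compact (box \<inter> base_polytope F)"
    using closed_base_polytope by (rule compact_Int_closed)
  moreover have "base_polytope F \<subseteq> box"
    unfolding box_def
    using base_polytope_le_singleton[of _ F] base_polytope_ge_compl[of _ F] by (auto simp: PiE_iff)
  ultimately show ?thesis
    by (metis inf.absorb2)
qed

lemma closed_vimage_block:
  assumes "closed A"
  shows "closed ((\<lambda>y::nat \<Rightarrow> 'n \<Rightarrow> real. y r) -` A)"
proof -
  have "closed ((\<lambda>y::nat \<Rightarrow> 'n \<Rightarrow> real. y r) -` A \<inter> UNIV)"
    using continuous_on_product_coordinates
    by (rule continuous_on_closed_vimage[OF closed_UNIV, THEN iffD1, rule_format, OF _ assms])
  then show ?thesis by simp
qed

lemma closed_prod_base: "closed (prod_base R (F :: nat \<Rightarrow> 'n::finite set \<Rightarrow> real))"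
proof -
  have "prod_base R F = (\<Inter>r\<in>{..<R}. (\<lambda>y. y r) -` base_polytope (F r))
      \<inter> (\<Inter>r\<in>{R..}. (\<lambda>y. y r) -` {\<lambda>_. 0})"
    unfolding prod_base_def by auto
  then show ?thesis
    by (simp only:) (intro closed_Int closed_INT ballI closed_vimage_block closed_base_polytope closed_singleton)
qed

lemma compact_prod_base: "compact (prod_base R (F :: nat \<Rightarrow> 'n::finite set \<Rightarrow> real))"
proof -
  define box where "box = PiE UNIV (\<lambda>r::nat. if r < R then base_polytope (F r) else {\<lambda>_::'n. 0::real})"
  have "compactin (product_topology (\<lambda>_. euclidean) UNIV) box"
    unfolding box_def by (subst compactin_PiE) (simp add: compact_base_polytope)
  then have "compact box" by (simp add: euclidean_product_topology)
  then have "compact (box \<inter> prod_base R F)"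
    using closed_prod_base by (rule compact_Int_closed)
  moreover have "prod_base R F \<subseteq> box"
  proof
    fix y assume "y \<in> prod_base R F"
    then show "y \<in> box" unfolding box_def prod_base_def by (simp add: PiE_iff)
  qed
  ultimately show ?thesis
    by (metis inf.absorb2)
qed

section \<open>Tight sets and exchanges\<close>

definition tight :: "('n::finite \<Rightarrow> real) \<Rightarrow> ('n set \<Rightarrow> real) \<Rightarrow> 'n set \<Rightarrow> bool" where
  "tight u G S \<longleftrightarrow> sum u S = G S"

text \<open>A little mass can be moved from \<open>j\<close> to \<open>k\<close> without leaving the base polytope.\<close>
definition exchangeable :: "('n::finite \<Rightarrow> real) \<Rightarrow> ('n set \<Rightarrow> real) \<Rightarrow> 'n \<Rightarrow> 'n \<Rightarrow> bool" where
  "exchangeable u G j k \<longleftrightarrow> (\<forall>S. k \<in> S \<longrightarrow> j \<notin> S \<longrightarrow> sum u S < G S)"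

lemma tight_empty: "G {} = 0 \<Longrightarrow> tight u G {}"
  by (simp add: tight_def)

lemma tight_UNIV: "u \<in> base_polytope G \<Longrightarrow> tight u G UNIV"
  by (simp add: tight_def base_polytope_sum_UNIV)

lemma tight_Un_Int:
  fixes u :: "'n::finite \<Rightarrow> real"
  assumes "submodular G" "u \<in> base_polytope G" "tight u G S" "tight u G T"
  shows "tight u G (S \<union> T) \<and> tight u G (S \<inter> T)"
proof -
  have "sum u (S \<union> T) + sum u (S \<inter> T) = sum u S + sum u T"
    by (rule sum.union_inter) simp_all
  moreover have "G (S \<union> T) + G (S \<inter> T) \<le> G S + G T"
    using assms(1) by (simp add: submodular_def)
  moreover have "sum u (S \<union> T) \<le> G (S \<union> T)" "sum u (S \<inter> T) \<le> G (S \<inter> T)"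
    using assms(2) by (simp_all add: base_polytope_sum_le)
  ultimately show ?thesis
    using assms(3,4) by (simp add: tight_def)
qed

lemma tight_Union:
  fixes u :: "'n::finite \<Rightarrow> real"
  assumes "submodular G" "u \<in> base_polytope G" "\<S> \<noteq> {}" "\<forall>S\<in>\<S>. tight u G S"
  shows "tight u G (\<Union>\<S>)"
proof -
  have "finite \<S>" by simp
  then show ?thesis
    using assms(3,4) by (induction rule: finite_ne_induct) (auto simp: tight_Un_Int[OF assms(1,2)])
qed

lemma tight_Inter:
  fixes u :: "'n::finite \<Rightarrow> real"
  assumes "submodular G" "u \<in> base_polytope G" "\<S> \<noteq> {}" "\<forall>S\<in>\<S>. tight u G S"
  shows "tight u G (\<Inter>\<S>)"
proof -
  have "finite \<S>" by simp
  then show ?thesis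
    using assms(3,4) by (induction rule: finite_ne_induct) (auto simp: tight_Un_Int[OF assms(1,2)])
qed

lemma sum_Compl:
  fixes f :: "'n::finite \<Rightarrow> real"
  shows "sum f (- S) = sum f UNIV - sum f S"
  by (metis Compl_eq_Diff_UNIV finite subset_UNIV sum_diff)

lemma exists_tight_avoiding:
  fixes u :: "'n::finite \<Rightarrow> real"
  assumes sm: "submodular G" and u: "u \<in> base_polytope G"
    and not_exch: "\<And>j. j \<in> J \<Longrightarrow> \<not> exchangeable u G j x"
  shows "\<exists>S. tight u G S \<and> x \<in> S \<and> S \<inter> J = {}"
proof (cases "J = {}")
  case True
  then show ?thesis
    using tight_UNIV[OF u] by blast
next
  case False
  have "\<exists>S. tight u G S \<and> x \<in> S \<and> j \<notin> S" if j: "j \<in> J" for j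
  proof -
    obtain S where "x \<in> S" "j \<notin> S" "\<not> sum u S < G S"
      using not_exch[OF j] unfolding exchangeable_def by blast
    then show ?thesis
      using base_polytope_sum_le[OF u, of S] by (auto simp: tight_def)
  qed
  then obtain S where S: "\<And>j. j \<in> J \<Longrightarrow> tight u G (S j) \<and> x \<in> S j \<and> j \<notin> S j"
    by metis
  have "tight u G (\<Inter>(S ` J))"
    using False S by (intro tight_Inter[OF sm u]) auto
  moreover have "x \<in> \<Inter>(S ` J)" "\<Inter>(S ` J) \<inter> J = {}"
    using S by blast+
  ultimately show ?thesis
    by blast
qed

text \<open>The witness is the largest tight set \<open>Z\<close> avoiding the coordinates of \<open>X\<close> where \<open>u\<close> exceeds \<open>y\<close>:
  by closedness it contains every coordinate outside \<open>X\<close> where \<open>u\<close> falls short of \<open>y\<close>.\<close>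
lemma exchange_closed_sum_nonpos:
  fixes u y :: "'n::finite \<Rightarrow> real"
  assumes sm: "submodular G" and G0: "G {} = 0"
    and u: "u \<in> base_polytope G" and y: "y \<in> base_polytope G"
    and closed: "\<And>j k. j \<in> X \<Longrightarrow> u j > y j \<Longrightarrow> u k < y k \<Longrightarrow> exchangeable u G j k \<Longrightarrow> k \<in> X"
  shows "(\<Sum>x\<in>X. u x - y x) \<le> 0"
proof -
  define J where "J = {j \<in> X. u j > y j}"
  define Z where "Z = \<Union>{S. tight u G S \<and> S \<inter> J = {}}"
  have Z_tight: "tight u G Z"
    unfolding Z_def using tight_empty[of G u, OF G0] by (intro tight_Union[OF sm u]) auto
  have ZJ: "Z \<inter> J = {}"
    unfolding Z_def by blast
  have deficit_in_Z: "x \<in> Z" if "x \<notin> X" "u x < y x" for x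
    using exists_tight_avoiding[OF sm u, of J x] closed that unfolding Z_def J_def by blast
  define v where "v x = u x - y x" for x
  have "sum v (X \<inter> Z) \<le> 0"
    using ZJ by (intro sum_nonpos) (auto simp: J_def v_def)
  moreover have "0 \<le> sum v (- X - Z)"
    using deficit_in_Z by (intro sum_nonneg) (force simp: v_def)
  moreover have "sum v X = sum v (X \<inter> Z) + sum v (X - Z)"
    by (rule sum.Int_Diff) simp
  moreover have "sum v (- Z) = sum v (X - Z) + sum v (- X - Z)"
    using sum.Int_Diff[of "- Z" v X] by (simp add: Diff_eq Int_commute)
  moreover have "0 \<le> sum v Z"
    using Z_tight base_polytope_sum_le[OF y, of Z] by (simp add: v_def sum_subtractf tight_def)
  moreover have "sum v UNIV = 0"
    using base_polytope_sum_UNIV[OF u] base_polytope_sum_UNIV[OF y] by (simp add: v_def sum_subtractf)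
  ultimately show ?thesis
    using sum_Compl[of v Z] by (simp add: v_def)
qed

lemma eventually_at_right_0_mult_le:
  fixes a b :: real
  assumes "0 < b"
  shows "eventually (\<lambda>e. e * a \<le> b) (at_right 0)"
proof -
  have "((\<lambda>e. e * a) \<longlongrightarrow> 0 * a) (at_right (0::real))"
    by (intro tendsto_intros)
  then have "eventually (\<lambda>e. e * a < b) (at_right (0::real))"
    using order_tendstoD(2) assms by fastforce
  then show ?thesis
    by (rule eventually_mono) simp
qed

lemma eventually_base_polytope_add:
  fixes u d :: "'n::finite \<Rightarrow> real"
  assumes u: "u \<in> base_polytope G" and d_UNIV: "sum d UNIV = 0"
    and d_tight: "\<And>S. tight u G S \<Longrightarrow> sum d S \<le> 0"
  shows "eventually (\<lambda>e. (\<lambda>i. u i + e * d i) \<in> base_polytope G) (at_right 0)"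
proof -
  have sum_eq: "sum (\<lambda>i. u i + e * d i) S = sum u S + e * sum d S" for e S
    by (simp add: sum.distrib sum_distrib_left)
  have "eventually (\<lambda>e. sum u S + e * sum d S \<le> G S) (at_right 0)" for S
  proof (cases "tight u G S")
    case True
    show ?thesis
      using eventually_at_right_less[of 0] by (rule eventually_mono)
        (use True d_tight[OF True] in \<open>simp add: tight_def mult_nonneg_nonpos\<close>)
  next
    case False
    then have "0 < G S - sum u S"
      using base_polytope_sum_le[OF u, of S] by (simp add: tight_def)
    from eventually_at_right_0_mult_le[OF this, of "sum d S"] show ?thesis
      by (rule eventually_mono) (simp add: mult.commute)
  qed
  then have "eventually (\<lambda>e. \<forall>S. sum u S + e * sum d S \<le> G S) (at_right 0)"
    by (rule eventually_all_finite)
  then show ?thesis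
    by (rule eventually_mono)
      (simp add: base_polytope_def sum_eq d_UNIV base_polytope_sum_UNIV[OF u])
qed

lemma abs_add_mult_opposite:
  fixes v d e :: real
  assumes "0 < e" "e * \<bar>d\<bar> \<le> \<bar>v\<bar>" "0 < v \<Longrightarrow> d \<le> 0" "v < 0 \<Longrightarrow> 0 \<le> d" "v = 0 \<Longrightarrow> d = 0"
  shows "\<bar>v + e * d\<bar> = \<bar>v\<bar> - e * \<bar>d\<bar>"
proof -
  have ed: "e * \<bar>d\<bar> = \<bar>e * d\<bar>"
    using assms(1) by (simp add: abs_mult)
  consider "0 < v" | "v < 0" | "v = 0"
    by linarith
  then show ?thesis
  proof cases
    case 1
    then have "e * d \<le> 0" using assms(1,3) by (simp add: mult_nonneg_nonpos)
    then show ?thesis using 1 assms(2) ed by arith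
  next
    case 2
    then have "0 \<le> e * d" using assms(1,4) by simp
    then show ?thesis using 2 assms(2) ed by arith
  qed (use assms(5) in simp)
qed

lemma eventually_abs_add_mult_opposite:
  fixes v d :: real
  assumes "0 < v \<Longrightarrow> d \<le> 0" "v < 0 \<Longrightarrow> 0 \<le> d" "v = 0 \<Longrightarrow> d = 0"
  shows "eventually (\<lambda>e. \<bar>v + e * d\<bar> = \<bar>v\<bar> - e * \<bar>d\<bar>) (at_right 0)"
proof (cases "v = 0")
  case False
  then have "eventually (\<lambda>e. 0 < e \<and> e * \<bar>d\<bar> \<le> \<bar>v\<bar>) (at_right 0)"
    by (intro eventually_conj eventually_at_right_less eventually_at_right_0_mult_le) (use False in simp)
  then show ?thesis
    by (rule eventually_mono) (use abs_add_mult_opposite assms in blast)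
qed (use assms(3) in simp)

section \<open>The \<open>\<ell>\<^sub>1\<close>-nearest point with a given image\<close>

definition blk_l1_dist :: "nat \<Rightarrow> (nat \<Rightarrow> 'n::finite \<Rightarrow> real) \<Rightarrow> (nat \<Rightarrow> 'n \<Rightarrow> real) \<Rightarrow> real" where
  "blk_l1_dist R y z = (\<Sum>r<R. \<Sum>i\<in>UNIV. \<bar>z r i - y r i\<bar>)"

definition l1_nearest :: "nat \<Rightarrow> (nat \<Rightarrow> 'n::finite set \<Rightarrow> real) \<Rightarrow> (nat \<Rightarrow> 'n \<Rightarrow> real)
    \<Rightarrow> (nat \<Rightarrow> 'n \<Rightarrow> real) \<Rightarrow> bool" where
  "l1_nearest R F y z \<longleftrightarrow> z \<in> prod_base R F \<and>
     (\<forall>z'\<in>prod_base R F. Aop R z' = Aop R z \<longrightarrow> blk_l1_dist R y z \<le> blk_l1_dist R y z')"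

definition exchange_arc :: "nat \<Rightarrow> (nat \<Rightarrow> 'n::finite set \<Rightarrow> real) \<Rightarrow> (nat \<Rightarrow> 'n \<Rightarrow> real)
    \<Rightarrow> (nat \<Rightarrow> 'n \<Rightarrow> real) \<Rightarrow> 'n \<Rightarrow> 'n \<Rightarrow> bool" where
  "exchange_arc R F y z j k \<longleftrightarrow> (\<exists>r<R. y r j < z r j \<and> z r k < y r k \<and> exchangeable (z r) (F r) j k)"

definition arc_flow :: "nat \<Rightarrow> (nat \<Rightarrow> 'n::finite set \<Rightarrow> real) \<Rightarrow> (nat \<Rightarrow> 'n \<Rightarrow> real)
    \<Rightarrow> (nat \<Rightarrow> 'n \<Rightarrow> real) \<Rightarrow> (nat \<Rightarrow> 'n \<Rightarrow> 'n \<Rightarrow> real) \<Rightarrow> bool" where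
  "arc_flow R F y z c \<longleftrightarrow> (\<forall>r j k. 0 \<le> c r j k) \<and>
     (\<forall>r j k. c r j k \<noteq> 0 \<longrightarrow> r < R \<and> y r j < z r j \<and> z r k < y r k \<and> exchangeable (z r) (F r) j k)"

definition net_inflow :: "('n::finite \<Rightarrow> 'n \<Rightarrow> real) \<Rightarrow> 'n \<Rightarrow> real" where
  "net_inflow c x = (\<Sum>j\<in>UNIV. c j x) - (\<Sum>k\<in>UNIV. c x k)"

lemma net_inflow_add: "net_inflow (\<lambda>j k. c j k + d j k) x = net_inflow c x + net_inflow d x"
  by (simp add: net_inflow_def sum.distrib)

lemma net_inflow_single:
  "net_inflow (\<lambda>j k. if j = a \<and> k = b then 1 else 0) x = of_bool (x = b) - of_bool (x = a)"
  by (simp add: net_inflow_def)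

lemma sum_net_inflow_single_arc:
  fixes r R :: nat
  assumes "r < R"
  shows "(\<Sum>r'<R. net_inflow (\<lambda>j k. if r' = r \<and> j = a \<and> k = b then 1 else 0) x)
    = of_bool (x = b) - of_bool (x = a)"
proof -
  have "net_inflow (\<lambda>j k. if r' = r \<and> j = a \<and> k = b then 1 else 0) x
      = (if r' = r then of_bool (x = b) - of_bool (x = a) else 0)" for r'
    using net_inflow_single[of a b x] by (simp add: net_inflow_def)
  then show ?thesis
    using assms by simp
qed

lemma sum_net_inflow:
  fixes c :: "'n::finite \<Rightarrow> 'n \<Rightarrow> real"
  shows "(\<Sum>x\<in>S. net_inflow c x) = (\<Sum>j\<in>UNIV. \<Sum>k\<in>UNIV. c j k * (of_bool (k \<in> S) - of_bool (j \<in> S)))"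
proof -
  have "(\<Sum>x\<in>S. \<Sum>j\<in>UNIV. c j x) = (\<Sum>j\<in>UNIV. \<Sum>k\<in>UNIV. c j k * of_bool (k \<in> S))"
    by (subst sum.swap) (simp add: sum_mult_of_bool_eq)
  moreover have "(\<Sum>x\<in>S. \<Sum>k\<in>UNIV. c x k) = (\<Sum>j\<in>UNIV. \<Sum>k\<in>UNIV. c j k * of_bool (j \<in> S))"
    by (simp add: sum_distrib_right[symmetric] sum_mult_of_bool_eq)
  ultimately show ?thesis
    by (simp add: net_inflow_def sum_subtractf right_diff_distrib)
qed

lemma exchange_path_flow:
  assumes "(exchange_arc R F y z)\<^sup>+\<^sup>+ a b"
  shows "\<exists>c. arc_flow R F y z c \<and> (\<exists>r j k. c r j k \<noteq> 0) \<and>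
    (\<forall>x. (\<Sum>r<R. net_inflow (c r) x) = of_bool (x = b) - of_bool (x = a))"
  using assms
proof (induction rule: tranclp_induct)
  case (base b)
  then obtain r where r: "r < R" "y r a < z r a" "z r b < y r b" "exchangeable (z r) (F r) a b"
    unfolding exchange_arc_def by blast
  define c where "c r' j k = (if r' = r \<and> j = a \<and> k = b then 1 else (0::real))" for r' j k
  have "(\<Sum>r'<R. net_inflow (c r') x) = of_bool (x = b) - of_bool (x = a)" for x
    unfolding c_def by (rule sum_net_inflow_single_arc[OF r(1)])
  moreover have "arc_flow R F y z c" "c r a b \<noteq> 0"
    unfolding arc_flow_def c_def using r by auto
  ultimately show ?case
    by blast
next
  case (step b d)
  then obtain c where c: "arc_flow R F y z c"
    and nz: "\<exists>r j k. c r j k \<noteq> 0" and net: "\<forall>x. (\<Sum>r<R. net_inflow (c r) x) = of_bool (x = b) - of_bool (x = a)"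
    by blast
  from step obtain r where r: "r < R" "y r b < z r b" "z r d < y r d" "exchangeable (z r) (F r) b d"
    unfolding exchange_arc_def by blast
  define c' where "c' r' j k = c r' j k + (if r' = r \<and> j = b \<and> k = d then 1 else 0)" for r' j k
  have "(\<Sum>r'<R. net_inflow (c' r') x) = of_bool (x = d) - of_bool (x = a)" for x
  proof -
    have "(\<Sum>r'<R. net_inflow (c' r') x)
        = (\<Sum>r'<R. net_inflow (c r') x) + (of_bool (x = d) - of_bool (x = b))"
      unfolding c'_def net_inflow_add sum.distrib sum_net_inflow_single_arc[OF r(1)] ..
    then show ?thesis
      using net by simp
  qed
  moreover have "arc_flow R F y z c'"
    using c r unfolding arc_flow_def c'_def by (smt (verit, ccfv_threshold))
  moreover have "\<exists>r j k. c' r j k \<noteq> 0"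
  proof -
    obtain r0 j0 k0 where "c r0 j0 k0 \<noteq> 0"
      using nz by blast
    moreover have "0 \<le> c r0 j0 k0"
      using c by (simp add: arc_flow_def)
    ultimately have "c' r0 j0 k0 \<noteq> 0"
      by (auto simp: c'_def)
    then show ?thesis
      by blast
  qed
  ultimately show ?case
    by blast
qed

text \<open>Moving \<open>z\<close> a little along \<open>D\<close> keeps it in \<open>B\<close> with the same image under \<open>A\<close>, and brings every
  coordinate closer to \<open>y\<close>; so \<open>D\<close> must vanish.\<close>
lemma l1_nearest_no_descent_direction:
  fixes R :: nat and F :: "nat \<Rightarrow> 'n::finite set \<Rightarrow> real" and y z D :: "nat \<Rightarrow> 'n \<Rightarrow> real"
  assumes z: "l1_nearest R F y z"
    and D_outside: "\<And>r x. \<not> r < R \<Longrightarrow> D r x = 0"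
    and D_UNIV: "\<And>r. sum (D r) UNIV = 0"
    and D_tight: "\<And>r S. tight (z r) (F r) S \<Longrightarrow> sum (D r) S \<le> 0"
    and D_sign: "\<And>r x. 0 < z r x - y r x \<Longrightarrow> D r x \<le> 0" "\<And>r x. z r x - y r x < 0 \<Longrightarrow> 0 \<le> D r x"
      "\<And>r x. z r x - y r x = 0 \<Longrightarrow> D r x = 0"
    and D_Aop: "\<And>x. (\<Sum>r<R. D r x) = 0"
  shows "D r x = 0"
proof (rule ccontr)
  assume "D r x \<noteq> 0"
  then have r: "r < R"
    using D_outside by blast
  have zB: "z \<in> prod_base R F"
    using z by (simp add: l1_nearest_def)
  have "eventually (\<lambda>e. 0 < e \<and> (\<forall>r\<in>{..<R}. (\<lambda>x. z r x + e * D r x) \<in> base_polytope (F r))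
      \<and> (\<forall>r\<in>{..<R}. \<forall>x. \<bar>(z r x - y r x) + e * D r x\<bar> = \<bar>z r x - y r x\<bar> - e * \<bar>D r x\<bar>)) (at_right 0)"
    using zB D_UNIV D_tight D_sign unfolding prod_base_def
    by (intro eventually_conj eventually_at_right_less eventually_ball_finite ballI eventually_all_finite
        eventually_base_polytope_add eventually_abs_add_mult_opposite) auto
  then obtain e where e: "0 < e" "\<And>r. r < R \<Longrightarrow> (\<lambda>x. z r x + e * D r x) \<in> base_polytope (F r)"
    "\<And>r x. r < R \<Longrightarrow> \<bar>(z r x - y r x) + e * D r x\<bar> = \<bar>z r x - y r x\<bar> - e * \<bar>D r x\<bar>"
    using eventually_happens[of _ "at_right (0::real)"] by force
  define z' where "z' r x = z r x + e * D r x" for r x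
  have "z' \<in> prod_base R F"
    using zB e(2) D_outside unfolding prod_base_def z'_def by auto
  moreover have "Aop R z' = Aop R z"
    using D_Aop by (simp add: Aop_def z'_def sum.distrib fun_eq_iff flip: sum_distrib_left)
  ultimately have "blk_l1_dist R y z \<le> blk_l1_dist R y z'"
    using z by (simp add: l1_nearest_def)
  moreover have "blk_l1_dist R y z' = blk_l1_dist R y z - e * (\<Sum>r<R. \<Sum>x\<in>UNIV. \<bar>D r x\<bar>)"
  proof -
    have "\<bar>z' r x - y r x\<bar> = \<bar>z r x - y r x\<bar> - e * \<bar>D r x\<bar>" if "r < R" for r x
      using e(3)[OF that, of x] by (simp add: z'_def algebra_simps)
    then show ?thesis
      unfolding blk_l1_dist_def by (simp add: sum_subtractf sum_distrib_left)
  qed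
  moreover have "0 < (\<Sum>r<R. \<Sum>x\<in>UNIV. \<bar>D r x\<bar>)"
  proof -
    have "0 < \<bar>D r x\<bar>"
      using \<open>D r x \<noteq> 0\<close> by simp
    also have "\<bar>D r x\<bar> \<le> (\<Sum>x\<in>UNIV. \<bar>D r x\<bar>)"
      by (rule member_le_sum) auto
    also have "\<dots> \<le> (\<Sum>r<R. \<Sum>x\<in>UNIV. \<bar>D r x\<bar>)"
      using r by (intro member_le_sum sum_nonneg) auto
    finally show ?thesis .
  qed
  ultimately show False
    using e(1) by (smt (verit) mult_pos_pos)
qed

lemma sum_net_inflow_UNIV: "sum (net_inflow c) UNIV = 0"
  unfolding net_inflow_def by (simp add: sum_subtractf sum.swap[of c])

lemma arc_flow_net_inflow_tight:
  assumes "arc_flow R F y z c" "tight (z r) (F r) S"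
  shows "sum (net_inflow (c r)) S \<le> 0"
  unfolding sum_net_inflow
proof (intro sum_nonpos)
  fix j k
  have "c r j k = 0 \<or> \<not> (k \<in> S \<and> j \<notin> S)"
    using assms unfolding arc_flow_def exchangeable_def tight_def by force
  then show "c r j k * (of_bool (k \<in> S) - of_bool (j \<in> S)) \<le> 0"
    using assms(1) by (auto simp: mult_nonneg_nonpos arc_flow_def)
qed

text \<open>Flow enters \<open>x\<close> in block \<open>r\<close> only if \<open>z r x < y r x\<close>, and leaves only if \<open>y r x < z r x\<close>.\<close>
lemma arc_flow_net_inflow_sign:
  assumes "arc_flow R F y z c"
  shows "0 < z r x - y r x \<Longrightarrow> net_inflow (c r) x \<le> 0" "z r x - y r x < 0 \<Longrightarrow> 0 \<le> net_inflow (c r) x"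
    "z r x - y r x = 0 \<Longrightarrow> net_inflow (c r) x = 0"
    "\<not> r < R \<Longrightarrow> net_inflow (c r) x = 0"
    "c r x k \<noteq> 0 \<Longrightarrow> net_inflow (c r) x < 0"
proof -
  have c_nonneg: "\<And>j k. 0 \<le> c r j k"
    and c_arc: "\<And>j k. c r j k \<noteq> 0 \<Longrightarrow> r < R \<and> y r j < z r j \<and> z r k < y r k"
    using assms unfolding arc_flow_def by blast+
  have "0 \<le> (\<Sum>j\<in>UNIV. c r j x)" "0 \<le> (\<Sum>k\<in>UNIV. c r x k)"
    by (simp_all add: sum_nonneg c_nonneg)
  moreover have "(\<Sum>j\<in>UNIV. c r j x) = 0" if "\<not> (r < R \<and> z r x < y r x)"
    using c_arc that by (metis (mono_tags) sum.neutral UNIV_I)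
  moreover have "(\<Sum>k\<in>UNIV. c r x k) = 0" if "\<not> (r < R \<and> y r x < z r x)"
    using c_arc that by (metis (mono_tags) sum.neutral UNIV_I)
  moreover have "c r x k \<le> (\<Sum>k\<in>UNIV. c r x k)"
    using c_nonneg by (intro member_le_sum) auto
  ultimately show "0 < z r x - y r x \<Longrightarrow> net_inflow (c r) x \<le> 0" "z r x - y r x < 0 \<Longrightarrow> 0 \<le> net_inflow (c r) x"
    "z r x - y r x = 0 \<Longrightarrow> net_inflow (c r) x = 0" "\<not> r < R \<Longrightarrow> net_inflow (c r) x = 0"
    "c r x k \<noteq> 0 \<Longrightarrow> net_inflow (c r) x < 0"
    using c_arc[of x k] c_nonneg[of x k] by (auto simp: net_inflow_def)
qed

lemma l1_nearest_no_exchange_cycle: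
  fixes R :: nat and F :: "nat \<Rightarrow> 'n::finite set \<Rightarrow> real" and y z :: "nat \<Rightarrow> 'n \<Rightarrow> real"
  assumes z: "l1_nearest R F y z"
  shows "\<not> (exchange_arc R F y z)\<^sup>+\<^sup>+ i i"
proof
  assume "(exchange_arc R F y z)\<^sup>+\<^sup>+ i i"
  from exchange_path_flow[OF this] obtain c where flow: "arc_flow R F y z c"
    and nz: "\<exists>r j k. c r j k \<noteq> 0" and net: "\<forall>x. (\<Sum>r<R. net_inflow (c r) x) = of_bool (x = i) - of_bool (x = i)"
    by (elim exE conjE) (blast intro: that)
  from nz obtain r j k where c_rjk: "c r j k \<noteq> 0"
    by (elim exE)
  have "net_inflow (c r) j = 0"
  proof (rule l1_nearest_no_descent_direction[OF z, where D = "\<lambda>r. net_inflow (c r)"])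
    show "sum (net_inflow (c r')) UNIV = 0" for r'
      by (rule sum_net_inflow_UNIV)
    show "sum (net_inflow (c r')) S \<le> 0" if "tight (z r') (F r') S" for r' S
      using arc_flow_net_inflow_tight[OF flow that] .
    show "(\<Sum>r'<R. net_inflow (c r') x) = 0" for x
      using net by simp
  qed (use arc_flow_net_inflow_sign[OF flow] in blast)+
  then show False
    using arc_flow_net_inflow_sign(5)[OF flow c_rjk] by simp
qed

text \<open>The coordinates reachable from \<open>i\<close> by exchange arcs form an exchange-closed set, and so
  does the same set without \<open>i\<close>, since there is no cycle through \<open>i\<close>.\<close>
lemma l1_nearest_pos_part_le:
  fixes R :: nat and F :: "nat \<Rightarrow> 'n::finite set \<Rightarrow> real" and y z :: "nat \<Rightarrow> 'n \<Rightarrow> real"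
  assumes subm: "\<forall>r<R. submodular (F r) \<and> F r {} = 0"
    and yB: "y \<in> prod_base R F" and z: "l1_nearest R F y z"
  shows "(\<Sum>r<R. max (z r i - y r i) 0) \<le> (\<Sum>x\<in>UNIV. max (Aop R y x - Aop R z x) 0)"
proof -
  let ?arc = "exchange_arc R F y z"
  define U where "U = {x. ?arc\<^sup>*\<^sup>* i x}"
  define W where "W = U - {i}"
  have zB: "z \<in> prod_base R F"
    using z by (simp add: l1_nearest_def)
  have closed_sum_nonpos: "(\<Sum>x\<in>X. z r x - y r x) \<le> 0"
    if r: "r < R" and X: "\<And>j k. j \<in> X \<Longrightarrow> ?arc j k \<Longrightarrow> k \<in> X" for r X
  proof (rule exchange_closed_sum_nonpos)
    show "submodular (F r)" "F r {} = 0"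
      using subm r by auto
    show "z r \<in> base_polytope (F r)" "y r \<in> base_polytope (F r)"
      using zB yB r by (auto simp: prod_base_def)
    show "k \<in> X" if "j \<in> X" "y r j < z r j" "z r k < y r k" "exchangeable (z r) (F r) j k" for j k
      using X[of j k] that r unfolding exchange_arc_def by blast
  qed
  have "(\<Sum>x\<in>U. z r x - y r x) \<le> 0" if "r < R" for r
    using that by (rule closed_sum_nonpos) (auto simp: U_def intro: rtranclp.rtrancl_into_rtrancl)
  moreover have "(\<Sum>x\<in>W. z r x - y r x) \<le> 0" if "r < R" for r
    using that
  proof (rule closed_sum_nonpos)
    fix j k assume j: "j \<in> W" and jk: "?arc j k"
    then have ij: "?arc\<^sup>*\<^sup>* i j"
      by (simp add: W_def U_def)
    have "k \<noteq> i"
      using l1_nearest_no_exchange_cycle[OF z, of i] rtranclp_into_tranclp1[OF ij jk] by auto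
    then show "k \<in> W"
      using ij jk by (simp add: W_def U_def rtranclp.rtrancl_into_rtrancl)
  qed
  moreover have "(\<Sum>x\<in>U. z r x - y r x) = (z r i - y r i) + (\<Sum>x\<in>W. z r x - y r x)" for r
    unfolding W_def by (rule sum.remove) (simp_all add: U_def)
  ultimately have "(\<Sum>r<R. max (z r i - y r i) 0) \<le> (\<Sum>r<R. \<Sum>x\<in>W. y r x - z r x)"
    by (intro sum_mono) (fastforce simp: sum_subtractf)
  also have "\<dots> = (\<Sum>x\<in>W. Aop R y x - Aop R z x)"
    by (subst sum.swap) (simp add: Aop_def sum_subtractf)
  also have "\<dots> \<le> (\<Sum>x\<in>UNIV. max (Aop R y x - Aop R z x) 0)"
    by (intro order_trans[OF sum_mono sum_mono2]) auto
  finally show ?thesis .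
qed

text \<open>The base polytope of \<open>dual_fun G\<close> is \<open>-B(G)\<close>; this turns negative parts into positive ones.\<close>
definition dual_fun :: "('n set \<Rightarrow> real) \<Rightarrow> 'n set \<Rightarrow> real" where
  "dual_fun G S = G (- S) - G UNIV"

lemma submodular_dual_fun:
  fixes G :: "'n set \<Rightarrow> real"
  assumes "submodular G"
  shows "submodular (dual_fun G)"
  unfolding submodular_def dual_fun_def
proof (intro allI)
  fix A B :: "'n set"
  have "- (A \<union> B) = - A \<inter> - B" "- (A \<inter> B) = - A \<union> - B"
    by auto
  then show "G (- (A \<union> B)) - G UNIV + (G (- (A \<inter> B)) - G UNIV) \<le> G (- A) - G UNIV + (G (- B) - G UNIV)"
    using assms[unfolded submodular_def, rule_format, of "- A" "- B"] by simp
qed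

lemma uminus_mem_base_polytope_dual_fun:
  fixes u :: "'n::finite \<Rightarrow> real"
  assumes "G {} = 0"
  shows "- u \<in> base_polytope (dual_fun G) \<longleftrightarrow> u \<in> base_polytope G"
proof -
  have neg: "sum (- u) S = - sum u S" for S
    by (simp add: fun_Compl_def sum_negf)
  have total: "sum (- u) UNIV = dual_fun G UNIV \<longleftrightarrow> sum u UNIV = G UNIV"
    unfolding dual_fun_def neg using assms by simp
  have compl: "sum (- u) S \<le> dual_fun G S \<longleftrightarrow> sum u (- S) \<le> G (- S)"
    if "sum u UNIV = G UNIV" for S
    unfolding dual_fun_def neg using that sum_Compl[of u S] by linarith
  show ?thesis
  proof
    assume m: "- u \<in> base_polytope (dual_fun G)"
    then have tot: "sum u UNIV = G UNIV"
      using total base_polytope_sum_UNIV by blast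
    have "sum u S \<le> G S" for S
      using base_polytope_sum_le[OF m, of "- S"] compl[OF tot, of "- S", unfolded double_compl] by blast
    with tot show "u \<in> base_polytope G"
      by (simp add: base_polytope_def)
  next
    assume m: "u \<in> base_polytope G"
    then have tot: "sum u UNIV = G UNIV"
      by (rule base_polytope_sum_UNIV)
    have "sum (- u) S \<le> dual_fun G S" for S
      using base_polytope_sum_le[OF m, of "- S"] compl[OF tot, of S] by blast
    with tot total show "- u \<in> base_polytope (dual_fun G)"
      unfolding base_polytope_def by blast
  qed
qed

lemma uminus_mem_prod_base_dual_fun:
  fixes y :: "nat \<Rightarrow> 'n::finite \<Rightarrow> real"
  assumes "\<forall>r<R. F r {} = 0"
  shows "- y \<in> prod_base R (\<lambda>r. dual_fun (F r)) \<longleftrightarrow> y \<in> prod_base R F"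
  using assms uminus_mem_base_polytope_dual_fun[of "F r" "y r" for r]
  by (auto simp: prod_base_def fun_eq_iff)

lemma Aop_uminus: "Aop R (- y) = - Aop R y"
  by (simp add: Aop_def fun_eq_iff sum_negf)

lemma blk_l1_dist_uminus: "blk_l1_dist R (- y) z = blk_l1_dist R y (- z)"
proof -
  have "\<bar>z r i - (- y) r i\<bar> = \<bar>(- z) r i - y r i\<bar>" for r i
    by (simp add: fun_Compl_def)
  then show ?thesis
    by (simp add: blk_l1_dist_def)
qed

lemma l1_nearest_dual_fun:
  assumes "\<forall>r<R. F r {} = 0" "l1_nearest R F y z"
  shows "l1_nearest R (\<lambda>r. dual_fun (F r)) (- y) (- z)"
  unfolding l1_nearest_def
proof (intro conjI ballI impI)
  show "- z \<in> prod_base R (\<lambda>r. dual_fun (F r))"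
    using assms by (simp add: uminus_mem_prod_base_dual_fun l1_nearest_def)
  fix z' assume z': "z' \<in> prod_base R (\<lambda>r. dual_fun (F r))" "Aop R z' = Aop R (- z)"
  have "- z' \<in> prod_base R F"
    using assms(1) z'(1) uminus_mem_prod_base_dual_fun[of R F "- z'"] by (simp add: fun_Compl_def)
  moreover have "Aop R (- z') = Aop R z"
    using z'(2) unfolding Aop_uminus by (simp add: fun_eq_iff)
  ultimately show "blk_l1_dist R (- y) (- z) \<le> blk_l1_dist R (- y) z'"
    unfolding blk_l1_dist_uminus using assms(2) by (simp add: l1_nearest_def fun_Compl_def)
qed

lemma l1_nearest_neg_part_le:
  fixes R :: nat and F :: "nat \<Rightarrow> 'n::finite set \<Rightarrow> real" and y z :: "nat \<Rightarrow> 'n \<Rightarrow> real"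
  assumes subm: "\<forall>r<R. submodular (F r) \<and> F r {} = 0"
    and yB: "y \<in> prod_base R F" and z: "l1_nearest R F y z"
  shows "(\<Sum>r<R. max (y r i - z r i) 0) \<le> (\<Sum>x\<in>UNIV. max (Aop R z x - Aop R y x) 0)"
proof -
  have "\<forall>r<R. submodular (dual_fun (F r)) \<and> dual_fun (F r) {} = 0"
    using subm by (simp add: submodular_dual_fun dual_fun_def)
  moreover have "- y \<in> prod_base R (\<lambda>r. dual_fun (F r))"
    using subm yB by (simp add: uminus_mem_prod_base_dual_fun)
  moreover have "l1_nearest R (\<lambda>r. dual_fun (F r)) (- y) (- z)"
    using subm z by (simp add: l1_nearest_dual_fun)
  ultimately show ?thesis
    using l1_nearest_pos_part_le[of R "\<lambda>r. dual_fun (F r)" "- y" "- z" i] by (simp add: Aop_uminus)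
qed

lemma sum_squares_le_square_sum:
  fixes f :: "'a \<Rightarrow> real"
  assumes "\<forall>x\<in>A. 0 \<le> f x"
  shows "(\<Sum>x\<in>A. (f x)\<^sup>2) \<le> (\<Sum>x\<in>A. f x)\<^sup>2"
proof (cases "finite A")
  case True
  then show ?thesis
    using assms
  proof (induction A rule: finite_induct)
    case (insert a A)
    then have "(\<Sum>x\<in>A. (f x)\<^sup>2) \<le> (sum f A)\<^sup>2" "0 \<le> 2 * f a * sum f A"
      by (simp_all add: sum_nonneg)
    then show ?case
      using insert(1,2) by (simp add: power2_sum)
  qed simp
qed simp

text \<open>Both images have total \<open>\<Sum>\<^sub>r F\<^sub>r([N])\<close>, so their difference has equal positive and negative
  parts.\<close>
lemma prod_base_sum_pos_part_Aop_diff: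
  fixes F :: "nat \<Rightarrow> 'n::finite set \<Rightarrow> real"
  assumes yB: "y \<in> prod_base R F" and zB: "z \<in> prod_base R F"
  shows "(\<Sum>x\<in>UNIV. max (Aop R z x - Aop R y x) 0) = (\<Sum>x\<in>UNIV. \<bar>Aop R z x - Aop R y x\<bar>) / 2"
proof -
  define d where "d x = Aop R z x - Aop R y x" for x
  have "sum (y r) UNIV = sum (z r) UNIV" if "r < R" for r
  proof -
    have "y r \<in> base_polytope (F r)" "z r \<in> base_polytope (F r)"
      using yB zB that by (simp_all add: prod_base_def)
    then show ?thesis
      by (simp add: base_polytope_sum_UNIV)
  qed
  then have "(\<Sum>x\<in>UNIV. d x) = 0"
    unfolding d_def Aop_def sum_subtractf by (subst (1 2) sum.swap) simp
  moreover have "max (d x) 0 - max (- d x) 0 = d x" "max (d x) 0 + max (- d x) 0 = \<bar>d x\<bar>" for x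
    by auto
  ultimately have "(\<Sum>x\<in>UNIV. max (d x) 0) - (\<Sum>x\<in>UNIV. max (- d x) 0) = 0"
    "(\<Sum>x\<in>UNIV. max (d x) 0) + (\<Sum>x\<in>UNIV. max (- d x) 0) = (\<Sum>x\<in>UNIV. \<bar>d x\<bar>)"
    by (simp_all add: sum_subtractf[symmetric] sum.distrib[symmetric])
  then show ?thesis
    by (simp add: d_def)
qed

text \<open>The positive and the negative part of the column \<open>z - y\<close> are each bounded in \<open>\<ell>\<^sub>1\<close> by
  half the \<open>\<ell>\<^sub>1\<close>-distance of the images.\<close>
lemma l1_nearest_coord_sq_le:
  fixes R :: nat and F :: "nat \<Rightarrow> 'n::finite set \<Rightarrow> real" and y z :: "nat \<Rightarrow> 'n \<Rightarrow> real"
  assumes subm: "\<forall>r<R. submodular (F r) \<and> F r {} = 0"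
    and yB: "y \<in> prod_base R F" and z: "l1_nearest R F y z"
  shows "(\<Sum>r<R. (z r i - y r i)\<^sup>2) \<le> (\<Sum>x\<in>UNIV. \<bar>Aop R z x - Aop R y x\<bar>)\<^sup>2 / 2"
proof -
  define h where "h = (\<Sum>x\<in>UNIV. \<bar>Aop R z x - Aop R y x\<bar>) / 2"
  define P where "P = (\<Sum>r<R. max (z r i - y r i) 0)"
  define N where "N = (\<Sum>r<R. max (y r i - z r i) 0)"
  have zB: "z \<in> prod_base R F"
    using z by (simp add: l1_nearest_def)
  have "P \<le> h" "N \<le> h" "0 \<le> P" "0 \<le> N"
    using l1_nearest_pos_part_le[OF subm yB z, of i] l1_nearest_neg_part_le[OF subm yB z, of i]
      prod_base_sum_pos_part_Aop_diff[OF yB zB] prod_base_sum_pos_part_Aop_diff[OF zB yB]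
    unfolding P_def N_def h_def by (simp_all add: sum_nonneg abs_minus_commute)
  have "(\<Sum>r<R. (z r i - y r i)\<^sup>2)
      = (\<Sum>r<R. (max (z r i - y r i) 0)\<^sup>2) + (\<Sum>r<R. (max (y r i - z r i) 0)\<^sup>2)"
  proof -
    have "(z r i - y r i)\<^sup>2 = (max (z r i - y r i) 0)\<^sup>2 + (max (y r i - z r i) 0)\<^sup>2" for r
      by (cases "y r i \<le> z r i") (simp_all add: max_def power2_eq_square algebra_simps)
    then show ?thesis
      by (simp add: sum.distrib)
  qed
  also have "\<dots> \<le> P\<^sup>2 + N\<^sup>2"
    unfolding P_def N_def by (intro add_mono sum_squares_le_square_sum) auto
  also have "\<dots> \<le> h\<^sup>2 + h\<^sup>2"
    using \<open>P \<le> h\<close> \<open>N \<le> h\<close> \<open>0 \<le> P\<close> \<open>0 \<le> N\<close> by (intro add_mono power_mono) auto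
  finally show ?thesis
    by (simp add: h_def power_divide)
qed

lemma continuous_on_Aop: "continuous_on S (\<lambda>z::nat \<Rightarrow> 'n::finite \<Rightarrow> real. Aop R z x)"
  unfolding Aop_def by (intro continuous_on_sum continuous_on_block_coord)

lemma closed_Aop_eq: "closed {z::nat \<Rightarrow> 'n::finite \<Rightarrow> real. Aop R z = a}"
proof -
  have "{z::nat \<Rightarrow> 'n \<Rightarrow> real. Aop R z = a} = {z. \<forall>x. Aop R z x = a x}"
    by (auto simp: fun_eq_iff)
  then show ?thesis
    by (simp only:) (intro closed_Collect_all closed_Collect_eq continuous_on_Aop continuous_on_const)
qed

lemma exists_l1_nearest_same_image:
  fixes F :: "nat \<Rightarrow> 'n::finite set \<Rightarrow> real"
  assumes "z0 \<in> prod_base R F"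
  shows "\<exists>z. l1_nearest R F y z \<and> Aop R z = Aop R z0"
proof -
  define M where "M = prod_base R F \<inter> {z. Aop R z = Aop R z0}"
  have "compact M"
    unfolding M_def using compact_prod_base closed_Aop_eq by (rule compact_Int_closed)
  moreover have "M \<noteq> {}"
    using assms by (auto simp: M_def)
  moreover have "continuous_on M (blk_l1_dist R y)"
    unfolding blk_l1_dist_def
    by (intro continuous_intros continuous_on_block_coord)
  ultimately obtain z where "z \<in> M" "\<forall>z'\<in>M. blk_l1_dist R y z \<le> blk_l1_dist R y z'"
    using continuous_attains_inf by blast
  then show ?thesis
    by (auto simp: M_def l1_nearest_def)
qed

section \<open>The objective and its minimizers\<close>

definition image_sqdist :: "nat \<Rightarrow> ('n::finite \<Rightarrow> real) \<Rightarrow> (nat \<Rightarrow> 'n \<Rightarrow> real) \<Rightarrow> (nat \<Rightarrow> 'n \<Rightarrow> real) \<Rightarrow> real" where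
  "image_sqdist R w y z = (1/2) * (\<Sum>i\<in>UNIV. inverse (w i) * (Aop R y i - Aop R z i)\<^sup>2)"

text \<open>\<open>grad_inner R w y z = \<langle>\<nabla>g\<^sub>w(y), z - y\<rangle>\<close>.\<close>
definition grad_inner :: "nat \<Rightarrow> ('n::finite \<Rightarrow> real) \<Rightarrow> (nat \<Rightarrow> 'n \<Rightarrow> real) \<Rightarrow> (nat \<Rightarrow> 'n \<Rightarrow> real) \<Rightarrow> real" where
  "grad_inner R w y z = (\<Sum>i\<in>UNIV. inverse (w i) * Aop R y i * (Aop R z i - Aop R y i))"

definition blk_sqdist :: "nat \<Rightarrow> ('n::finite \<Rightarrow> real) \<Rightarrow> (nat \<Rightarrow> 'n \<Rightarrow> real) \<Rightarrow> (nat \<Rightarrow> 'n \<Rightarrow> real) \<Rightarrow> real" where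
  "blk_sqdist R v y z = (\<Sum>r<R. \<Sum>i\<in>UNIV. v i * (y r i - z r i)\<^sup>2)"

lemma wnorm_sq: "\<forall>i. 0 \<le> v i \<Longrightarrow> (wnorm v z)\<^sup>2 = (\<Sum>i\<in>UNIV. v i * (z i)\<^sup>2)"
  unfolding wnorm_def by (intro real_sqrt_pow2 sum_nonneg) auto

lemma blk_sqdist_nonneg: "\<forall>i. 0 \<le> v i \<Longrightarrow> 0 \<le> blk_sqdist R v y z"
  unfolding blk_sqdist_def by (intro sum_nonneg) auto

lemma g_w_eq_sum: "\<forall>i. 0 < w i \<Longrightarrow> g_w R w y = (1/2) * (\<Sum>i\<in>UNIV. inverse (w i) * (Aop R y i)\<^sup>2)"
  unfolding g_w_def using wnorm_sq[of "\<lambda>i. inverse (w i)"] by (simp add: less_imp_le)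

lemma g_w_cong_Aop: "Aop R y = Aop R z \<Longrightarrow> g_w R w y = g_w R w z"
  by (simp add: g_w_def)

lemma g_w_expand:
  assumes "\<forall>i. 0 < w i"
  shows "g_w R w z = g_w R w y + grad_inner R w y z + image_sqdist R w z y"
  unfolding g_w_eq_sum[OF assms] grad_inner_def image_sqdist_def
  by (simp add: sum_distrib_left sum.distrib[symmetric] power2_eq_square algebra_simps)

lemma image_sqdist_nonneg: "\<forall>i. 0 < w i \<Longrightarrow> 0 \<le> image_sqdist R w y z"
  unfolding image_sqdist_def by (intro mult_nonneg_nonneg sum_nonneg) (auto simp: less_imp_le)

lemma image_sqdist_commute: "image_sqdist R w y z = image_sqdist R w z y"
  unfolding image_sqdist_def by (simp add: power2_commute)

lemma image_sqdist_cong: "Aop R z = Aop R z' \<Longrightarrow> image_sqdist R w y z = image_sqdist R w y z'"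
  unfolding image_sqdist_def by simp

lemma image_sqdist_le_0_imp_Aop_eq:
  assumes "\<forall>i. 0 < w i" "image_sqdist R w y z \<le> 0"
  shows "Aop R y = Aop R z"
proof
  fix i
  have "(\<Sum>j\<in>UNIV. inverse (w j) * (Aop R y j - Aop R z j)\<^sup>2) = 0"
    using assms image_sqdist_nonneg[OF assms(1), of R y z] by (simp add: image_sqdist_def)
  then have "inverse (w i) * (Aop R y i - Aop R z i)\<^sup>2 = 0"
    using assms(1) by (subst (asm) sum_nonneg_eq_0_iff) (auto simp: less_imp_le)
  then show "Aop R y i = Aop R z i"
    using assms(1)[rule_format, of i] by simp
qed

lemma continuous_on_g_w: "\<forall>i. 0 < w i \<Longrightarrow> continuous_on S (g_w R w)"
  unfolding g_w_def wnorm_def by (intro continuous_intros continuous_on_Aop)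

lemma Xi_nonempty:
  assumes "\<forall>i. 0 < w i" "y \<in> prod_base R F"
  shows "\<exists>x. x \<in> Xi R F w"
proof -
  have "prod_base R F \<noteq> {}"
    using assms(2) by blast
  from continuous_attains_inf[OF compact_prod_base this continuous_on_g_w[OF assms(1)]] show ?thesis
    by (auto simp: Xi_def)
qed

lemma nonneg_of_small_quadratic:
  fixes a b :: real
  assumes h: "\<And>t. 0 < t \<Longrightarrow> t \<le> 1 \<Longrightarrow> 0 \<le> t * a + t\<^sup>2 * b"
  shows "0 \<le> a"
proof (rule ccontr)
  assume "\<not> 0 \<le> a"
  then have a: "a < 0" by simp
  define t where "t = min 1 (- a / (2 * (\<bar>b\<bar> + 1)))"
  have "0 < - a / (2 * (\<bar>b\<bar> + 1))"
    using a by (intro divide_pos_pos) auto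
  then have t: "0 < t" "t \<le> 1"
    by (auto simp: t_def)
  have "t * \<bar>b\<bar> \<le> (- a / (2 * (\<bar>b\<bar> + 1))) * \<bar>b\<bar>"
    by (intro mult_right_mono) (auto simp: t_def)
  also have "\<dots> = (- a / 2) * (\<bar>b\<bar> / (\<bar>b\<bar> + 1))"
    by (simp add: field_simps)
  also have "\<dots> \<le> - a / 2"
    using a by (intro mult_left_le) (auto simp: field_simps)
  finally have tb: "t * \<bar>b\<bar> \<le> - a / 2" .
  have "0 \<le> t * a + t\<^sup>2 * b"
    using h t by simp
  also have "t\<^sup>2 * b \<le> t * (t * \<bar>b\<bar>)"
    using t by (simp add: power2_eq_square mult_left_mono)
  finally have "0 \<le> t * (a + t * \<bar>b\<bar>)"
    by (simp add: algebra_simps)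
  then have "0 \<le> a + t * \<bar>b\<bar>"
    using t by (simp add: zero_le_mult_iff)
  then show False
    using tb a by linarith
qed

lemma grad_inner_nonneg_at_Xi:
  assumes w: "\<forall>i. 0 < w i" and x: "x \<in> Xi R F w" and y: "y \<in> prod_base R F"
  shows "0 \<le> grad_inner R w x y"
proof (rule nonneg_of_small_quadratic)
  fix t :: real assume t: "0 < t" "t \<le> 1"
  define xt where "xt = (\<lambda>r i. (1 - t) * x r i + t * y r i)"
  have "xt \<in> prod_base R F"
    unfolding xt_def using prod_base_convex_comb[of x R F y t] x y t by (simp add: Xi_def)
  then have min: "g_w R w x \<le> g_w R w xt"
    using x by (simp add: Xi_def)
  have Axt: "Aop R xt i = Aop R x i + t * (Aop R y i - Aop R x i)" for i
    unfolding xt_def Aop_def by (simp add: sum.distrib sum_distrib_left algebra_simps sum_subtractf)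
  have "grad_inner R w x xt = t * grad_inner R w x y"
    unfolding grad_inner_def Axt by (simp add: sum_distrib_left algebra_simps)
  moreover have "image_sqdist R w xt x = t\<^sup>2 * image_sqdist R w y x"
  proof -
    have "(Aop R x i + t * (Aop R y i - Aop R x i) - Aop R x i)\<^sup>2 = t\<^sup>2 * (Aop R y i - Aop R x i)\<^sup>2" for i
      by (simp add: power_mult_distrib[symmetric])
    then show ?thesis
      unfolding image_sqdist_def Axt by (simp add: sum_distrib_left algebra_simps)
  qed
  ultimately have "g_w R w xt = g_w R w x + t * grad_inner R w x y + t\<^sup>2 * image_sqdist R w y x"
    using g_w_expand[OF w, of R xt x] by simp
  with min show "0 \<le> t * grad_inner R w x y + t\<^sup>2 * image_sqdist R w y x"
    by simp
qed

lemma image_sqdist_le_g_w_diff: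
  assumes w: "\<forall>i. 0 < w i" and x: "x \<in> Xi R F w" and y: "y \<in> prod_base R F"
  shows "image_sqdist R w y x \<le> g_w R w y - g_w R w x"
  using g_w_expand[OF w, of R y x] grad_inner_nonneg_at_Xi[OF w x y] by simp

lemma Xi_eq_same_image:
  assumes w: "\<forall>i. 0 < w i" and x: "x \<in> Xi R F w"
  shows "Xi R F w = {y \<in> prod_base R F. Aop R y = Aop R x}"
proof
  show "Xi R F w \<subseteq> {y \<in> prod_base R F. Aop R y = Aop R x}"
  proof
    fix y assume y: "y \<in> Xi R F w"
    then have "y \<in> prod_base R F" "g_w R w y \<le> g_w R w x"
      using x by (auto simp: Xi_def)
    then show "y \<in> {y \<in> prod_base R F. Aop R y = Aop R x}"
      using image_sqdist_le_g_w_diff[OF w x] image_sqdist_le_0_imp_Aop_eq[OF w] by fastforce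
  qed
  show "{y \<in> prod_base R F. Aop R y = Aop R x} \<subseteq> Xi R F w"
    using x by (auto simp: Xi_def dest: g_w_cong_Aop[of R _ x w])
qed

lemma g_star_eq_Xi: "x \<in> Xi R F w \<Longrightarrow> g_star R F w = g_w R w x"
  unfolding g_star_def by (intro cInf_eq_minimum) (auto simp: Xi_def)

lemma compact_Xi:
  assumes "\<forall>i. 0 < w i" "x \<in> Xi R F w"
  shows "compact (Xi R F w)"
proof -
  have "Xi R F w = prod_base R F \<inter> {y. Aop R y = Aop R x}"
    using Xi_eq_same_image[OF assms] by auto
  then show ?thesis
    using compact_Int_closed[OF compact_prod_base closed_Aop_eq] by simp
qed

lemma blk_dist_Xi_attained:
  fixes v :: "'n::finite \<Rightarrow> real"
  assumes w: "\<forall>i. 0 < w i" and v: "\<forall>i. 0 \<le> v i" and x: "x \<in> Xi R F w"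
  obtains x0 where "x0 \<in> Xi R F w" "\<forall>z\<in>Xi R F w. blk_sqdist R v y x0 \<le> blk_sqdist R v y z"
    "(blk_dist R v y (Xi R F w))\<^sup>2 = blk_sqdist R v y x0"
proof -
  have "continuous_on (Xi R F w) (blk_sqdist R v y)"
    unfolding blk_sqdist_def by (intro continuous_intros continuous_on_block_coord)
  then obtain x0 where x0: "x0 \<in> Xi R F w" and min: "\<forall>z\<in>Xi R F w. blk_sqdist R v y x0 \<le> blk_sqdist R v y z"
    using continuous_attains_inf[OF compact_Xi[OF w x]] x by blast
  have "blk_norm R v (\<lambda>r i. y r i - z r i) = sqrt (blk_sqdist R v y z)" for z
    unfolding blk_norm_def blk_sqdist_def using wnorm_sq[OF v] by simp
  then have "blk_dist R v y (Xi R F w) = sqrt (blk_sqdist R v y x0)"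
    unfolding blk_dist_def by (intro cInf_eq_minimum) (use x0 min in \<open>auto intro: real_sqrt_le_mono\<close>)
  then show ?thesis
    using that x0 min blk_sqdist_nonneg[OF v] by simp
qed

lemma sum_abs_squared_le:
  fixes d w :: "'n::finite \<Rightarrow> real"
  assumes "\<forall>i. 0 < w i"
  shows "(\<Sum>x\<in>UNIV. \<bar>d x\<bar>)\<^sup>2 \<le> (\<Sum>x\<in>UNIV. w x) * (\<Sum>x\<in>UNIV. (d x)\<^sup>2 / w x)"
proof -
  have "\<bar>d x\<bar> = sqrt (w x) * (\<bar>d x\<bar> / sqrt (w x))" "(sqrt (w x))\<^sup>2 = w x"
    "(\<bar>d x\<bar> / sqrt (w x))\<^sup>2 = (d x)\<^sup>2 / w x" for x
    using assms[rule_format, of x] by (simp_all add: power_divide less_imp_le)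
  then show ?thesis
    using Cauchy_Schwarz_ineq_sum[of "\<lambda>x. sqrt (w x)" "\<lambda>x. \<bar>d x\<bar> / sqrt (w x)" UNIV] by simp
qed

text \<open>Take the \<open>\<ell>\<^sub>1\<close>-nearest point to \<open>y\<close> with the image of a minimizer, and apply Cauchy--Schwarz.\<close>
lemma blk_sqdist_Xi_le:
  fixes R :: nat and F :: "nat \<Rightarrow> 'n::finite set \<Rightarrow> real" and w v :: "'n \<Rightarrow> real"
  assumes subm: "\<forall>r<R. submodular (F r) \<and> F r {} = 0"
    and w: "\<forall>i. 0 < w i" and v: "\<forall>i. 0 \<le> v i" and x: "x \<in> Xi R F w" and y: "y \<in> prod_base R F"
  shows "\<exists>z\<in>Xi R F w. blk_sqdist R v y z \<le> (\<Sum>i\<in>UNIV. w i) * (\<Sum>i\<in>UNIV. v i) * image_sqdist R w y x"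
proof -
  obtain z where z: "l1_nearest R F y z" and Az: "Aop R z = Aop R x"
    using exists_l1_nearest_same_image[of x R F y] x by (auto simp: Xi_def)
  then have "z \<in> Xi R F w"
    using Xi_eq_same_image[OF w x] by (simp add: l1_nearest_def)
  define S where "S = (\<Sum>i\<in>UNIV. \<bar>Aop R x i - Aop R y i\<bar>)"
  have "blk_sqdist R v y z = (\<Sum>i\<in>UNIV. v i * (\<Sum>r<R. (z r i - y r i)\<^sup>2))"
    unfolding blk_sqdist_def by (subst sum.swap) (simp add: sum_distrib_left power2_commute)
  also have "\<dots> \<le> (\<Sum>i\<in>UNIV. v i * (S\<^sup>2 / 2))"
    using l1_nearest_coord_sq_le[OF subm y z] v unfolding S_def Az by (intro sum_mono mult_left_mono) auto
  also have "\<dots> = (\<Sum>i\<in>UNIV. v i) * (S\<^sup>2 / 2)"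
    by (simp add: sum_distrib_right)
  also have "\<dots> \<le> (\<Sum>i\<in>UNIV. v i) * ((\<Sum>i\<in>UNIV. w i) * (\<Sum>i\<in>UNIV. (Aop R x i - Aop R y i)\<^sup>2 / w i) / 2)"
    using sum_abs_squared_le[OF w, of "\<lambda>i. Aop R x i - Aop R y i"] v unfolding S_def
    by (intro mult_left_mono divide_right_mono) (auto intro: sum_nonneg)
  also have "\<dots> = (\<Sum>i\<in>UNIV. w i) * (\<Sum>i\<in>UNIV. v i) * image_sqdist R w y x"
  proof -
    have "(Aop R x i - Aop R y i)\<^sup>2 / w i = inverse (w i) * (Aop R y i - Aop R x i)\<^sup>2" for i
      by (simp add: power2_commute divide_inverse)
    then show ?thesis
      unfolding image_sqdist_def by simp
  qed
  finally show ?thesis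
    using \<open>z \<in> Xi R F w\<close> by blast
qed

section \<open>The weighted projection\<close>

lemma wproj_variational:
  fixes G :: "'n::finite set \<Rightarrow> real" and v u :: "'n \<Rightarrow> real"
  assumes ne: "base_polytope G \<noteq> {}" and v: "\<forall>i. 0 < v i"
  defines "p \<equiv> wproj (base_polytope G) v u"
  shows "p \<in> base_polytope G"
    and "\<And>x. x \<in> base_polytope G \<Longrightarrow> 0 \<le> (\<Sum>i\<in>UNIV. v i * (p i - u i) * (x i - p i))"
proof -
  let ?B = "base_polytope G"
  have "continuous_on ?B (\<lambda>z. wnorm v (\<lambda>i. z i - u i))"
    unfolding wnorm_def
    by (intro continuous_intros continuous_on_subset[OF continuous_on_product_coordinates]) auto
  then have "\<exists>z. z \<in> ?B \<and> (\<forall>z'\<in>?B. wnorm v (\<lambda>i. z i - u i) \<le> wnorm v (\<lambda>i. z' i - u i))"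
    using continuous_attains_inf[OF compact_base_polytope ne] by blast
  then have p: "p \<in> ?B \<and> (\<forall>z\<in>?B. wnorm v (\<lambda>i. p i - u i) \<le> wnorm v (\<lambda>i. z i - u i))"
    unfolding p_def wproj_def by (rule someI_ex)
  then show "p \<in> ?B"
    by blast
  have p_min: "(\<Sum>i\<in>UNIV. v i * (p i - u i)\<^sup>2) \<le> (\<Sum>i\<in>UNIV. v i * (z i - u i)\<^sup>2)" if "z \<in> ?B" for z
    using p that by (simp add: wnorm_def)
  fix x assume x: "x \<in> ?B"
  let ?a = "2 * (\<Sum>i\<in>UNIV. v i * (p i - u i) * (x i - p i))"
  let ?b = "\<Sum>i\<in>UNIV. v i * (x i - p i)\<^sup>2"
  have "0 \<le> t * ?a + t\<^sup>2 * ?b" if t: "0 < t" "t \<le> 1" for t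
  proof -
    define zt where "zt i = (1 - t) * p i + t * x i" for i
    have "zt \<in> ?B"
      unfolding zt_def using p x t by (intro base_polytope_convex_comb) auto
    then have "(\<Sum>i\<in>UNIV. v i * (p i - u i)\<^sup>2) \<le> (\<Sum>i\<in>UNIV. v i * (zt i - u i)\<^sup>2)"
      by (rule p_min)
    also have "\<dots> = (\<Sum>i\<in>UNIV. v i * (p i - u i)\<^sup>2) + (t * ?a + t\<^sup>2 * ?b)"
      unfolding zt_def
      by (simp add: sum.distrib[symmetric] sum_distrib_left power2_eq_square algebra_simps)
    finally show ?thesis
      by simp
  qed
  then have "0 \<le> ?a"
    by (rule nonneg_of_small_quadratic)
  then show "0 \<le> (\<Sum>i\<in>UNIV. v i * (p i - u i) * (x i - p i))"
    by simp
qed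

text \<open>The hypothesis is the optimality condition of \<open>p\<close> as weighted projection of \<open>y\<^sub>r - v\<^sup>-\<^sup>1 g\<close>.\<close>
lemma three_point_ineq:
  fixes v g yr p x :: "'n::finite \<Rightarrow> real"
  assumes v: "\<forall>i. 0 < v i"
    and vi: "0 \<le> (\<Sum>i\<in>UNIV. v i * (p i - (yr i - inverse (v i) * g i)) * (x i - p i))"
  shows "(\<Sum>i\<in>UNIV. g i * (p i - yr i)) + (1/2) * (\<Sum>i\<in>UNIV. v i * (p i - yr i)\<^sup>2)
         + (1/2) * (\<Sum>i\<in>UNIV. v i * (p i - x i)\<^sup>2)
       \<le> (\<Sum>i\<in>UNIV. g i * (x i - yr i)) + (1/2) * (\<Sum>i\<in>UNIV. v i * (x i - yr i)\<^sup>2)"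
proof -
  have "v i * (p i - (yr i - inverse (v i) * g i)) * (x i - p i)
      = (g i * (x i - yr i) + (1/2) * (v i * (x i - yr i)\<^sup>2))
        - (g i * (p i - yr i) + (1/2) * (v i * (p i - yr i)\<^sup>2) + (1/2) * (v i * (p i - x i)\<^sup>2))" for i
    using v[rule_format, of i] by (simp add: power2_eq_square field_simps)
  then show ?thesis
    using vi by (simp add: sum_subtractf sum.distrib sum_distrib_left)
qed

section \<open>Uniform sampling of \<open>K\<close> blocks\<close>

lemma finite_Ksubsets: "finite (Ksubsets R K)"
  unfolding Ksubsets_def by (rule finite_subset[of _ "Pow {..<R}"]) auto

lemma card_Ksubsets: "card (Ksubsets R K) = R choose K"
  unfolding Ksubsets_def using n_subsets[of "{..<R}" K] by simp

lemma card_Ksubsets_superset: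
  assumes D: "D \<subseteq> {..<R}" "card D \<le> K"
  shows "card {C \<in> Ksubsets R K. D \<subseteq> C} = (R - card D) choose (K - card D)"
proof -
  have fin: "finite D" "\<And>C. C \<subseteq> {..<R} \<Longrightarrow> finite C"
    using D(1) finite_subset by auto
  have "bij_betw (\<lambda>C. C - D) {C \<in> Ksubsets R K. D \<subseteq> C} {E. E \<subseteq> {..<R} - D \<and> card E = K - card D}"
  proof (rule bij_betw_byWitness[where f' = "\<lambda>E. E \<union> D"])
    show "(\<lambda>C. C - D) ` {C \<in> Ksubsets R K. D \<subseteq> C} \<subseteq> {E. E \<subseteq> {..<R} - D \<and> card E = K - card D}"
      using fin by (auto simp: Ksubsets_def card_Diff_subset)
    show "(\<lambda>E. E \<union> D) ` {E. E \<subseteq> {..<R} - D \<and> card E = K - card D} \<subseteq> {C \<in> Ksubsets R K. D \<subseteq> C}"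
    proof (rule image_subsetI)
      fix E assume "E \<in> {E. E \<subseteq> {..<R} - D \<and> card E = K - card D}"
      then have E: "E \<subseteq> {..<R} - D" "card E = K - card D"
        by auto
      then have "card (E \<union> D) = K"
        using fin D(2) finite_subset[of E "{..<R}"] by (subst card_Un_disjoint) auto
      then show "E \<union> D \<in> {C \<in> Ksubsets R K. D \<subseteq> C}"
        using E(1) D(1) by (auto simp: Ksubsets_def)
    qed
  qed auto
  then have "card {C \<in> Ksubsets R K. D \<subseteq> C} = card {E. E \<subseteq> {..<R} - D \<and> card E = K - card D}"
    by (rule bij_betw_same_card)
  also have "\<dots> = (R - card D) choose (K - card D)"
    using n_subsets[of "{..<R} - D" "K - card D"] D(1) fin by (simp add: card_Diff_subset)
  finally show ?thesis .
qed

lemma card_Ksubsets_mem: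
  fixes r R K :: nat
  assumes r: "r < R" and K: "1 \<le> K"
  shows "real (card {C \<in> Ksubsets R K. r \<in> C}) = real K / real R * real (card (Ksubsets R K))"
proof -
  obtain n k where n: "R = Suc n" and k: "K = Suc k"
    using r K by (metis Suc_le_D less_imp_Suc_add One_nat_def)
  have "card {C \<in> Ksubsets R K. r \<in> C} = n choose k"
    using card_Ksubsets_superset[of "{r}" R K] r K n k by simp
  moreover have "real (Suc n) * real (n choose k) = real (Suc n choose Suc k) * real (Suc k)"
    using Suc_times_binomial_eq[of n k] by (metis of_nat_mult)
  ultimately show ?thesis
    unfolding card_Ksubsets n k by (simp add: field_simps del: of_nat_Suc)
qed

lemma card_Ksubsets_mem2:
  fixes r s R K :: nat
  assumes r: "r < R" and s: "s < R" and rs: "r \<noteq> s" and K: "1 \<le> K"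
  shows "real (card {C \<in> Ksubsets R K. r \<in> C \<and> s \<in> C})
       = real K * (real K - 1) / (real R * (real R - 1)) * real (card (Ksubsets R K))"
proof (cases "K = 1")
  case True
  have "\<not> {r, s} \<subseteq> C" if "C \<in> Ksubsets R K" for C
    using that True rs card_mono[of C "{r, s}"] finite_subset[of C "{..<R}"] by (auto simp: Ksubsets_def)
  then have empty: "{C \<in> Ksubsets R K. r \<in> C \<and> s \<in> C} = {}"
    by blast
  show ?thesis
    unfolding empty using True by simp
next
  case False
  obtain n k where n: "R = Suc (Suc n)" and k: "K = Suc (Suc k)"
    using r s rs K False by (metis One_nat_def Suc_le_D less_Suc_eq_0_disj less_imp_Suc_add nat_neq_iff le_neq_implies_less)
  define X Y B where "X = real (n choose k)" and "Y = real (Suc n choose Suc k)"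
    and "B = real (Suc (Suc n) choose Suc (Suc k))"
  have "card {C \<in> Ksubsets R K. r \<in> C \<and> s \<in> C} = n choose k"
    using card_Ksubsets_superset[of "{r, s}" R K] r s rs n k by simp
  then have card_eq: "real (card {C \<in> Ksubsets R K. r \<in> C \<and> s \<in> C}) = X"
    by (simp add: X_def)
  have e1: "real (Suc (Suc n)) * Y = B * real (Suc (Suc k))"
    unfolding Y_def B_def of_nat_mult[symmetric] by (rule arg_cong[where f=real], rule Suc_times_binomial_eq)
  have e2: "real (Suc n) * X = Y * real (Suc k)"
    unfolding X_def Y_def of_nat_mult[symmetric] by (rule arg_cong[where f=real], rule Suc_times_binomial_eq)
  have "real R * (real R - 1) * X = real (Suc (Suc n)) * (real (Suc n) * X)"
    using n by simp
  also have "\<dots> = real K * (real K - 1) * B"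
    unfolding e2 mult.assoc[symmetric] e1 using k by simp
  finally have "real R * (real R - 1) * X = real K * (real K - 1) * B" .
  moreover have "real R * (real R - 1) \<noteq> 0"
    using n by simp
  ultimately have "X = real K * (real K - 1) * B / (real R * (real R - 1))"
    by (simp add: eq_divide_eq mult.commute)
  moreover have "real (card (Ksubsets R K)) = B"
    unfolding card_Ksubsets B_def n k ..
  ultimately show ?thesis
    unfolding card_eq by simp
qed

lemma sum_Ksubsets_if_mem:
  fixes a :: real
  shows "(\<Sum>C\<in>Ksubsets R K. if P C then a else 0) = a * real (card {C \<in> Ksubsets R K. P C})"
  by (simp add: sum.inter_filter[symmetric] finite_Ksubsets)

lemma sum_Ksubsets_sum_mem:
  assumes "1 \<le> K"
  shows "(\<Sum>C\<in>Ksubsets R K. \<Sum>r<R. if r \<in> C then a r else 0)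
       = real K / real R * real (card (Ksubsets R K)) * (\<Sum>r<R. a r)"
proof -
  have "(\<Sum>C\<in>Ksubsets R K. \<Sum>r<R. if r \<in> C then a r else 0)
      = (\<Sum>r<R. \<Sum>C\<in>Ksubsets R K. if r \<in> C then a r else 0)"
    by (rule sum.swap)
  also have "\<dots> = (\<Sum>r<R. a r * (real K / real R * real (card (Ksubsets R K))))"
    using assms by (intro sum.cong refl) (simp add: sum_Ksubsets_if_mem card_Ksubsets_mem)
  also have "\<dots> = real K / real R * real (card (Ksubsets R K)) * (\<Sum>r<R. a r)"
    by (simp only: sum_distrib_right[symmetric] mult.commute)
  finally show ?thesis .
qed

lemma sum_Ksubsets_square_sum_mem:
  assumes "1 \<le> K"
  shows "(\<Sum>C\<in>Ksubsets R K. (\<Sum>r<R. if r \<in> C then a r else 0)\<^sup>2)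
       = real (card (Ksubsets R K)) * (real K / real R * (\<Sum>r<R. (a r)\<^sup>2)
          + real K * (real K - 1) / (real R * (real R - 1)) * ((\<Sum>r<R. a r)\<^sup>2 - (\<Sum>r<R. (a r)\<^sup>2)))"
proof -
  define N where "N = real (card (Ksubsets R K))"
  define p where "p = real K / real R"
  define p2 where "p2 = real K * (real K - 1) / (real R * (real R - 1))"
  have pair_count: "(\<Sum>C\<in>Ksubsets R K. if r \<in> C \<and> s \<in> C then a r * a s else 0)
      = a r * a s * (if r = s then p * N else p2 * N)" if "r < R" "s < R" for r s
    using that assms card_Ksubsets_mem[of r R K] card_Ksubsets_mem2[of r R s K]
    by (cases "r = s") (simp_all add: sum_Ksubsets_if_mem p_def p2_def N_def)
  have "(\<Sum>C\<in>Ksubsets R K. (\<Sum>r<R. if r \<in> C then a r else 0)\<^sup>2)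
      = (\<Sum>C\<in>Ksubsets R K. \<Sum>r<R. \<Sum>s<R. if r \<in> C \<and> s \<in> C then a r * a s else 0)"
    unfolding power2_eq_square sum_product by (intro sum.cong refl) simp
  also have "\<dots> = (\<Sum>r<R. \<Sum>s<R. \<Sum>C\<in>Ksubsets R K. if r \<in> C \<and> s \<in> C then a r * a s else 0)"
    by (subst sum.swap) (simp add: sum.swap[of _ "Ksubsets R K"])
  also have "\<dots> = (\<Sum>r<R. \<Sum>s<R. p2 * N * (a r * a s) + (if r = s then (p - p2) * N * (a r * a s) else 0))"
    by (intro sum.cong refl) (simp add: pair_count algebra_simps)
  also have "\<dots> = p2 * N * (\<Sum>r<R. \<Sum>s<R. a r * a s) + (p - p2) * N * (\<Sum>r<R. (a r)\<^sup>2)"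
    by (simp add: sum.distrib sum_distrib_left power2_eq_square)
  also have "(\<Sum>r<R. \<Sum>s<R. a r * a s) = (\<Sum>r<R. a r)\<^sup>2"
    by (simp add: power2_eq_square sum_product)
  also have "p2 * N * (\<Sum>r<R. a r)\<^sup>2 + (p - p2) * N * (\<Sum>r<R. (a r)\<^sup>2) = N * (p * (\<Sum>r<R. (a r)\<^sup>2) + p2 * ((\<Sum>r<R. a r)\<^sup>2 - (\<Sum>r<R. (a r)\<^sup>2)))"
    by (simp add: algebra_simps)
  finally show ?thesis
    unfolding N_def p_def p2_def .
qed

lemma square_sum_le_card_support:
  fixes a :: "nat \<Rightarrow> real"
  assumes T: "T \<subseteq> {..<R}" and a: "\<And>r. r \<notin> T \<Longrightarrow> a r = 0"
  shows "(\<Sum>r<R. a r)\<^sup>2 \<le> real (card T) * (\<Sum>r<R. (a r)\<^sup>2)"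
proof -
  have "(\<Sum>r<R. a r) = (\<Sum>r\<in>T. a r)" "(\<Sum>r<R. (a r)\<^sup>2) = (\<Sum>r\<in>T. (a r)\<^sup>2)"
    using T a by (auto intro: sum.mono_neutral_right)
  then show ?thesis
    using Cauchy_Schwarz_ineq_sum[of "\<lambda>_. 1" a T] by simp
qed

lemma sum_Ksubsets_square_sum_mem_le:
  fixes a :: "nat \<Rightarrow> real"
  assumes K: "1 \<le> K" "K \<le> R" and R2: "2 \<le> R"
    and T: "T \<subseteq> {..<R}" and a: "\<And>r. r \<notin> T \<Longrightarrow> a r = 0"
  shows "(\<Sum>C\<in>Ksubsets R K. (\<Sum>r<R. if r \<in> C then a r else 0)\<^sup>2)
       \<le> real (card (Ksubsets R K)) * (real K / real R) *
          (((real K - 1) / (real R - 1) * real (card T) + (real R - real K) / (real R - 1)) * (\<Sum>r<R. (a r)\<^sup>2))"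
proof -
  define q where "q = (real K - 1) / (real R - 1)"
  define A2 where "A2 = (\<Sum>r<R. (a r)\<^sup>2)"
  have q: "0 \<le> q" "real K * (real K - 1) / (real R * (real R - 1)) = real K / real R * q"
    using K R2 by (simp_all add: q_def)
  have "(\<Sum>r<R. a r)\<^sup>2 - A2 \<le> (real (card T) - 1) * A2"
    using square_sum_le_card_support[OF T a] by (simp add: A2_def algebra_simps)
  then have "q * ((\<Sum>r<R. a r)\<^sup>2 - A2) \<le> q * ((real (card T) - 1) * A2)"
    using q(1) by (rule mult_left_mono)
  then have "A2 + q * ((\<Sum>r<R. a r)\<^sup>2 - A2) \<le> (1 + q * (real (card T) - 1)) * A2"
    by (simp add: algebra_simps)
  also have "1 + q * (real (card T) - 1) = q * real (card T) + (real R - real K) / (real R - 1)"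
  proof -
    have "1 + (k - 1) / d * (m - 1) = (k - 1) / d * m + ((d + 1) - k) / d" if "d \<noteq> 0" for d k m :: real
      using that by (simp add: field_simps)
    from this[of "real R - 1" "real K" "real (card T)"] show ?thesis
      using R2 by (simp add: q_def)
  qed
  finally have "real K / real R * (A2 + q * ((\<Sum>r<R. a r)\<^sup>2 - A2))
      \<le> real K / real R * ((q * real (card T) + (real R - real K) / (real R - 1)) * A2)"
    by (rule mult_left_mono) simp
  then have "real (card (Ksubsets R K)) * (real K / real R * (A2 + q * ((\<Sum>r<R. a r)\<^sup>2 - A2)))
      \<le> real (card (Ksubsets R K)) * (real K / real R * ((q * real (card T) + (real R - real K) / (real R - 1)) * A2))"
    by (rule mult_left_mono) simp
  then show ?thesis
    unfolding sum_Ksubsets_square_sum_mem[OF K(1)] q(2) A2_def[symmetric] q_def[symmetric]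
    by (simp only: distrib_left mult.assoc)
qed

section \<open>One step of the algorithm\<close>

definition eso_weights :: "nat \<Rightarrow> nat \<Rightarrow> (nat \<Rightarrow> 'n set \<Rightarrow> real) \<Rightarrow> ('n \<Rightarrow> real) \<Rightarrow> 'n \<Rightarrow> real" where
  "eso_weights R K F w i =
     inverse (w i) * ((real K - 1) / (real R - 1) * real (mu R F i) + (real R - real K) / (real R - 1))"

lemma g_w_block_update:
  assumes w: "\<forall>i. 0 < w i"
  shows "g_w R w (\<lambda>r. if r \<in> C then T r else y r)
     = g_w R w y + (\<Sum>r<R. if r \<in> C then \<Sum>i\<in>UNIV. grad_r R w y i * (T r i - y r i) else 0)
       + (1/2) * (\<Sum>i\<in>UNIV. inverse (w i) * (\<Sum>r<R. if r \<in> C then T r i - y r i else 0)\<^sup>2)"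
proof -
  let ?z = "\<lambda>r. if r \<in> C then T r else y r"
  have Az: "Aop R ?z i - Aop R y i = (\<Sum>r<R. if r \<in> C then T r i - y r i else 0)" for i
    unfolding Aop_def sum_subtractf[symmetric] by (intro sum.cong) auto
  have "grad_inner R w y ?z = (\<Sum>i\<in>UNIV. \<Sum>r<R. if r \<in> C then grad_r R w y i * (T r i - y r i) else 0)"
    unfolding grad_inner_def mult.assoc Az by (simp add: grad_r_def sum_distrib_left if_distrib ac_simps cong: if_cong)
  also have "\<dots> = (\<Sum>r<R. if r \<in> C then \<Sum>i\<in>UNIV. grad_r R w y i * (T r i - y r i) else 0)"
    by (subst sum.swap) (intro sum.cong refl, simp)
  finally show ?thesis
    using g_w_expand[OF w, of R ?z y] unfolding image_sqdist_def Az by simp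
qed

text \<open>Block \<open>r\<close> can move coordinate \<open>i\<close> only if \<open>i \<in> S\<^sub>r\<close>, so at most \<open>\<mu>\<^sub>i\<close> blocks contribute.\<close>
lemma sum_Ksubsets_block_update_sq_le:
  fixes F :: "nat \<Rightarrow> 'n::finite set \<Rightarrow> real"
  assumes F0: "\<forall>r<R. F r {} = 0" and K: "1 \<le> K" "K \<le> R" and R2: "2 \<le> R"
    and yB: "y \<in> prod_base R F" and TB: "\<forall>r<R. T r \<in> base_polytope (F r)"
  shows "(\<Sum>C\<in>Ksubsets R K. (\<Sum>r<R. if r \<in> C then T r i - y r i else 0)\<^sup>2)
    \<le> real (card (Ksubsets R K)) * (real K / real R) *
       (((real K - 1) / (real R - 1) * real (mu R F i) + (real R - real K) / (real R - 1))
        * (\<Sum>r<R. (T r i - y r i)\<^sup>2))"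
proof -
  define S where "S = {r. r < R \<and> i \<in> support_set (F r)}"
  define h where "h r = (if r < R then T r i - y r i else 0)" for r
  have "h r = 0" if "r \<notin> S" for r
  proof (cases "r < R")
    case True
    then have "i \<notin> support_set (F r)" "T r \<in> base_polytope (F r)" "y r \<in> base_polytope (F r)" "F r {} = 0"
      using that F0 TB yB by (auto simp: S_def prod_base_def)
    then have "T r i = 0" "y r i = 0"
      using base_polytope_zero_outside_support by blast+
    then show ?thesis
      by (simp add: h_def)
  qed (simp add: h_def)
  moreover have "S \<subseteq> {..<R}" "card S = mu R F i"
    by (auto simp: S_def mu_def)
  ultimately show ?thesis
    using sum_Ksubsets_square_sum_mem_le[OF K R2, of S h] by (simp add: h_def cong: if_cong)
qed

lemma sum_Ksubsets_g_w_block_update_le: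
  fixes R K :: nat and F :: "nat \<Rightarrow> 'n::finite set \<Rightarrow> real" and w :: "'n \<Rightarrow> real"
  assumes F0: "\<forall>r<R. F r {} = 0"
    and w: "\<forall>i. 0 < w i" and K: "1 \<le> K" "K \<le> R" and R2: "2 \<le> R"
    and yB: "y \<in> prod_base R F" and TB: "\<forall>r<R. T r \<in> base_polytope (F r)"
  shows "(\<Sum>C\<in>Ksubsets R K. g_w R w (\<lambda>r. if r \<in> C then T r else y r))
     \<le> real (card (Ksubsets R K)) * (g_w R w y + real K / real R *
         ((\<Sum>r<R. \<Sum>i\<in>UNIV. grad_r R w y i * (T r i - y r i))
          + (1/2) * (\<Sum>r<R. \<Sum>i\<in>UNIV. eso_weights R K F w i * (T r i - y r i)\<^sup>2)))"
proof -
  define N where "N = real (card (Ksubsets R K))"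
  define p where "p = real K / real R"
  define G where "G r = (\<Sum>i\<in>UNIV. grad_r R w y i * (T r i - y r i))" for r
  define Q where "Q i = (\<Sum>C\<in>Ksubsets R K. (\<Sum>r<R. if r \<in> C then T r i - y r i else 0)\<^sup>2)" for i
  have "(\<Sum>C\<in>Ksubsets R K. g_w R w (\<lambda>r. if r \<in> C then T r else y r))
      = N * g_w R w y + (\<Sum>C\<in>Ksubsets R K. \<Sum>r<R. if r \<in> C then G r else 0)
        + (1/2) * (\<Sum>i\<in>UNIV. inverse (w i) * Q i)"
    unfolding g_w_block_update[OF w] Q_def G_def
    by (simp add: sum.distrib sum_distrib_left N_def sum.swap[of _ "Ksubsets R K"])
  also have "(\<Sum>C\<in>Ksubsets R K. \<Sum>r<R. if r \<in> C then G r else 0) = p * N * (\<Sum>r<R. G r)"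
    unfolding p_def N_def by (rule sum_Ksubsets_sum_mem[OF K(1)])
  finally have eq: "(\<Sum>C\<in>Ksubsets R K. g_w R w (\<lambda>r. if r \<in> C then T r else y r))
      = N * g_w R w y + p * N * (\<Sum>r<R. G r) + (1/2) * (\<Sum>i\<in>UNIV. inverse (w i) * Q i)" .
  have "(\<Sum>i\<in>UNIV. inverse (w i) * Q i)
      \<le> (\<Sum>i\<in>UNIV. N * p * (\<Sum>r<R. eso_weights R K F w i * (T r i - y r i)\<^sup>2))"
  proof (rule sum_mono)
    fix i
    have "inverse (w i) * Q i \<le> inverse (w i) * (N * p *
        (((real K - 1) / (real R - 1) * real (mu R F i) + (real R - real K) / (real R - 1))
          * (\<Sum>r<R. (T r i - y r i)\<^sup>2)))"
      using sum_Ksubsets_block_update_sq_le[OF F0 K R2 yB TB, of i] w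
      unfolding Q_def N_def p_def by (intro mult_left_mono) (auto simp: less_imp_le)
    then show "inverse (w i) * Q i \<le> N * p * (\<Sum>r<R. eso_weights R K F w i * (T r i - y r i)\<^sup>2)"
      by (simp add: eso_weights_def sum_distrib_right sum_distrib_left ac_simps)
  qed
  also have "\<dots> = N * p * (\<Sum>r<R. \<Sum>i\<in>UNIV. eso_weights R K F w i * (T r i - y r i)\<^sup>2)"
    by (subst sum.swap) (simp add: sum_distrib_left)
  finally show ?thesis
    unfolding eq by (simp add: N_def p_def G_def algebra_simps)
qed

lemma sum_Ksubsets_blk_sqdist_block_update:
  assumes "1 \<le> K"
  shows "(\<Sum>C\<in>Ksubsets R K. blk_sqdist R v (\<lambda>r. if r \<in> C then T r else y r) x)
     = real (card (Ksubsets R K)) * (blk_sqdist R v y x + real K / real R *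
         (blk_sqdist R v T x - blk_sqdist R v y x))"
proof -
  define D where "D r = (\<Sum>i\<in>UNIV. v i * (T r i - x r i)\<^sup>2) - (\<Sum>i\<in>UNIV. v i * (y r i - x r i)\<^sup>2)" for r
  have "blk_sqdist R v (\<lambda>r. if r \<in> C then T r else y r) x = blk_sqdist R v y x + (\<Sum>r<R. if r \<in> C then D r else 0)" for C
    unfolding blk_sqdist_def sum.distrib[symmetric] D_def by (intro sum.cong refl) auto
  then show ?thesis
    using sum_Ksubsets_sum_mem[OF assms, of D R]
    by (simp add: sum.distrib D_def blk_sqdist_def sum_subtractf algebra_simps)
qed

definition prox_block :: "nat \<Rightarrow> (nat \<Rightarrow> 'n::finite set \<Rightarrow> real) \<Rightarrow> ('n \<Rightarrow> real) \<Rightarrow> ('n \<Rightarrow> real)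
    \<Rightarrow> (nat \<Rightarrow> 'n \<Rightarrow> real) \<Rightarrow> nat \<Rightarrow> 'n \<Rightarrow> real" where
  "prox_block R F w \<nu> y r = wproj (base_polytope (F r)) \<nu> (\<lambda>i. y r i - inverse (\<nu> i) * grad_r R w y i)"

lemma alg_step_eq_prox_block:
  "alg_step R F w \<nu> C y = (\<lambda>r. if r \<in> C then prox_block R F w \<nu> y r else y r)"
  unfolding alg_step_def prox_block_def ..

lemma prox_block_variational:
  assumes "\<forall>i. 0 < \<nu> i" "y \<in> prod_base R F" "r < R"
  shows "prox_block R F w \<nu> y r \<in> base_polytope (F r)"
    and "\<And>x. x \<in> base_polytope (F r) \<Longrightarrow> 0 \<le> (\<Sum>i\<in>UNIV. \<nu> i *
      (prox_block R F w \<nu> y r i - (y r i - inverse (\<nu> i) * grad_r R w y i)) * (x i - prox_block R F w \<nu> y r i))"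
proof -
  have "base_polytope (F r) \<noteq> {}"
    using assms(2,3) by (auto simp: prod_base_def)
  from wproj_variational[OF this assms(1)] show "prox_block R F w \<nu> y r \<in> base_polytope (F r)"
    and "\<And>x. x \<in> base_polytope (F r) \<Longrightarrow> 0 \<le> (\<Sum>i\<in>UNIV. \<nu> i *
      (prox_block R F w \<nu> y r i - (y r i - inverse (\<nu> i) * grad_r R w y i)) * (x i - prox_block R F w \<nu> y r i))"
    unfolding prox_block_def by blast+
qed

lemma alg_step_in_prod_base:
  assumes "y \<in> prod_base R F" "C \<in> Ksubsets R K" "\<forall>i. 0 < \<nu> i"
  shows "alg_step R F w \<nu> C y \<in> prod_base R F"
  using assms prox_block_variational(1)[OF assms(3,1)]
  unfolding alg_step_eq_prox_block prod_base_def Ksubsets_def by auto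

lemma alg_iter_in_prod_base:
  assumes "y \<in> prod_base R F" "set Cs \<subseteq> Ksubsets R K" "\<forall>i. 0 < \<nu> i"
  shows "alg_iter R F w \<nu> y Cs \<in> prod_base R F"
  using assms
proof (induction Cs arbitrary: y)
  case (Cons C Cs)
  then show ?case
    using alg_step_in_prod_base[of y R F C K \<nu> w] by (simp add: alg_iter_def)
qed (simp add: alg_iter_def)

lemma prox_block_three_point:
  fixes w \<nu> :: "'n::finite \<Rightarrow> real"
  assumes \<nu>: "\<forall>i. 0 < \<nu> i" and yB: "y \<in> prod_base R F" and xB: "x \<in> prod_base R F"
  defines "T \<equiv> prox_block R F w \<nu> y"
  shows "(\<Sum>r<R. \<Sum>i\<in>UNIV. grad_r R w y i * (T r i - y r i))
      + (1/2) * (\<Sum>r<R. \<Sum>i\<in>UNIV. \<nu> i * (T r i - y r i)\<^sup>2)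
      + (1/2) * (blk_sqdist R \<nu> T x - blk_sqdist R \<nu> y x) \<le> grad_inner R w y x"
proof -
  define blk where "blk r = (\<Sum>i\<in>UNIV. grad_r R w y i * (T r i - y r i))
      + (1/2) * (\<Sum>i\<in>UNIV. \<nu> i * (T r i - y r i)\<^sup>2)
      + (1/2) * ((\<Sum>i\<in>UNIV. \<nu> i * (T r i - x r i)\<^sup>2) - (\<Sum>i\<in>UNIV. \<nu> i * (y r i - x r i)\<^sup>2))" for r
  have "blk r \<le> (\<Sum>i\<in>UNIV. grad_r R w y i * (x r i - y r i))" if r: "r < R" for r
  proof -
    have "x r \<in> base_polytope (F r)"
      using xB r by (simp add: prod_base_def)
    from three_point_ineq[OF \<nu> prox_block_variational(2)[OF \<nu> yB r this]] show ?thesis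
      unfolding T_def blk_def by (simp add: power2_commute algebra_simps)
  qed
  moreover have "(\<Sum>r<R. \<Sum>i\<in>UNIV. grad_r R w y i * (T r i - y r i))
      + (1/2) * (\<Sum>r<R. \<Sum>i\<in>UNIV. \<nu> i * (T r i - y r i)\<^sup>2)
      + (1/2) * (blk_sqdist R \<nu> T x - blk_sqdist R \<nu> y x) = (\<Sum>r<R. blk r)"
    unfolding blk_sqdist_def blk_def sum.distrib sum_distrib_left[symmetric] sum_subtractf ..
  ultimately have "(\<Sum>r<R. \<Sum>i\<in>UNIV. grad_r R w y i * (T r i - y r i))
      + (1/2) * (\<Sum>r<R. \<Sum>i\<in>UNIV. \<nu> i * (T r i - y r i)\<^sup>2)
      + (1/2) * (blk_sqdist R \<nu> T x - blk_sqdist R \<nu> y x)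
      \<le> (\<Sum>r<R. \<Sum>i\<in>UNIV. grad_r R w y i * (x r i - y r i))"
    by (metis (no_types, lifting) lessThan_iff sum_mono)
  also have "\<dots> = grad_inner R w y x"
  proof -
    have "(\<Sum>r<R. grad_r R w y i * (x r i - y r i)) = inverse (w i) * Aop R y i * (Aop R x i - Aop R y i)" for i
      unfolding grad_r_def sum_distrib_left[symmetric] by (simp add: Aop_def sum_subtractf)
    then show ?thesis
      unfolding grad_inner_def by (subst sum.swap) simp
  qed
  finally show ?thesis .
qed

lemma contraction_arith:
  fixes e q D L p :: real
  assumes q0: "0 \<le> q" and qe: "q \<le> e" and D0: "0 \<le> D" and DL: "2 * D \<le> L * q" and L2: "2 \<le> L"
    and p0: "0 \<le> p"
  shows "e + D - p * (e + q) \<le> (1 - p * (4 / (L + 2))) * (e + D)"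
proof -
  define b where "b = 4 / (L + 2)"
  have Lp: "0 < L + 2"
    using L2 by simp
  have b1: "b \<le> 1"
    using L2 by (simp add: b_def divide_le_eq)
  have "b * D = 4 * D / (L + 2)"
    by (simp add: b_def)
  also have "\<dots> \<le> 2 * L * q / (L + 2)"
    using DL Lp by (intro divide_right_mono) auto
  also have "2 * L * q / (L + 2) = (2 - b) * q"
    using Lp by (simp add: b_def field_simps)
  finally have "b * D \<le> (2 - b) * q" .
  moreover have "(1 - b) * q \<le> (1 - b) * e"
    using b1 qe by (intro mult_left_mono) auto
  ultimately have "b * (e + D) \<le> e + q"
    by (simp add: algebra_simps)
  then have "p * (b * (e + D)) \<le> p * (e + q)"
    using p0 by (rule mult_left_mono)
  then show ?thesis
    unfolding b_def[symmetric] by (simp add: algebra_simps)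
qed

definition lyapunov :: "nat \<Rightarrow> (nat \<Rightarrow> 'n::finite set \<Rightarrow> real) \<Rightarrow> ('n \<Rightarrow> real) \<Rightarrow> ('n \<Rightarrow> real)
    \<Rightarrow> (nat \<Rightarrow> 'n \<Rightarrow> real) \<Rightarrow> real" where
  "lyapunov R F w \<nu> y = g_w R w y - g_star R F w + (1/2) * (blk_dist R \<nu> y (Xi R F w))\<^sup>2"

text \<open>The separable overapproximation and the three-point inequality at a nearest minimizer \<open>x\<^sub>0\<close>,
  combined with the strong convexity of \<open>g\<^sub>w\<close> in \<open>Ay\<close>.\<close>
lemma sum_Ksubsets_lyapunov_alg_step_le_gap:
  fixes R K :: nat and F :: "nat \<Rightarrow> 'n::finite set \<Rightarrow> real" and w :: "'n \<Rightarrow> real"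
  assumes F0: "\<forall>r<R. F r {} = 0"
    and w: "\<forall>i. 0 < w i" and K: "1 \<le> K" "K \<le> R" and R2: "2 \<le> R"
    and yB: "y \<in> prod_base R F" and \<nu>: "\<forall>i. 0 < eso_weights R K F w i"
    and x0: "x0 \<in> Xi R F w"
    and dist_y: "(blk_dist R (eso_weights R K F w) y (Xi R F w))\<^sup>2 = blk_sqdist R (eso_weights R K F w) y x0"
  defines "\<nu> \<equiv> eso_weights R K F w"
  shows "(\<Sum>C\<in>Ksubsets R K. lyapunov R F w \<nu> (alg_step R F w \<nu> C y))
     \<le> real (card (Ksubsets R K)) * (lyapunov R F w \<nu> y
        - real K / real R * (g_w R w y - g_star R F w + image_sqdist R w y x0))"
proof -
  define N where "N = real (card (Ksubsets R K))"
  define p where "p = real K / real R"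
  define T where "T = prox_block R F w \<nu> y"
  define st where "st C = (\<lambda>r. if r \<in> C then T r else y r)" for C :: "nat set"
  have \<nu>_pos: "\<forall>i. 0 < \<nu> i" and \<nu>_nonneg: "\<forall>i. 0 \<le> \<nu> i"
    using \<nu> by (simp_all add: \<nu>_def less_imp_le)
  have TB: "\<forall>r<R. T r \<in> base_polytope (F r)"
    unfolding T_def using prox_block_variational(1)[OF \<nu>_pos yB] by blast
  have x0B: "x0 \<in> prod_base R F" and g_x0: "g_w R w x0 = g_star R F w"
    using x0 g_star_eq_Xi[OF x0] by (simp_all add: Xi_def)
  define G where "G = (\<Sum>r<R. \<Sum>i\<in>UNIV. grad_r R w y i * (T r i - y r i))"
  define H where "H = (\<Sum>r<R. \<Sum>i\<in>UNIV. \<nu> i * (T r i - y r i)\<^sup>2)"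
  define Dl where "Dl = blk_sqdist R \<nu> T x0 - blk_sqdist R \<nu> y x0"
  have g_avg: "(\<Sum>C\<in>Ksubsets R K. g_w R w (st C)) \<le> N * (g_w R w y + p * (G + (1/2) * H))"
    using sum_Ksubsets_g_w_block_update_le[OF F0 w K R2 yB TB]
    unfolding st_def N_def p_def G_def H_def \<nu>_def .
  have "(blk_dist R \<nu> (st C) (Xi R F w))\<^sup>2 \<le> blk_sqdist R \<nu> (st C) x0" for C
    using blk_dist_Xi_attained[OF w \<nu>_nonneg x0, of "st C"] x0 by metis
  then have "(\<Sum>C\<in>Ksubsets R K. (blk_dist R \<nu> (st C) (Xi R F w))\<^sup>2) \<le> (\<Sum>C\<in>Ksubsets R K. blk_sqdist R \<nu> (st C) x0)"
    by (rule sum_mono)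
  also have "\<dots> = N * (blk_sqdist R \<nu> y x0 + p * Dl)"
    unfolding st_def N_def p_def Dl_def by (rule sum_Ksubsets_blk_sqdist_block_update[OF K(1)])
  finally have dist_avg: "(\<Sum>C\<in>Ksubsets R K. (blk_dist R \<nu> (st C) (Xi R F w))\<^sup>2)
      \<le> N * (blk_sqdist R \<nu> y x0 + p * Dl)" .
  have "G + (1/2) * H + (1/2) * Dl \<le> grad_inner R w y x0"
    using prox_block_three_point[OF \<nu>_pos yB x0B] unfolding G_def H_def Dl_def T_def .
  also have "grad_inner R w y x0 = - (g_w R w y - g_star R F w + image_sqdist R w y x0)"
    using g_w_expand[OF w, of R x0 y] g_x0 image_sqdist_commute[of R w x0 y] by simp
  finally have "p * (G + (1/2) * H + (1/2) * Dl) \<le> p * - (g_w R w y - g_star R F w + image_sqdist R w y x0)"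
    by (rule mult_left_mono) (simp add: p_def)
  then have three_point: "N * (p * (G + (1/2) * H + (1/2) * Dl))
      \<le> N * (p * - (g_w R w y - g_star R F w + image_sqdist R w y x0))"
    by (rule mult_left_mono) (simp_all add: N_def)
  have "alg_step R F w \<nu> C y = st C" for C
    unfolding alg_step_eq_prox_block st_def T_def ..
  then have "(\<Sum>C\<in>Ksubsets R K. lyapunov R F w \<nu> (alg_step R F w \<nu> C y))
      = (\<Sum>C\<in>Ksubsets R K. g_w R w (st C)) - N * g_star R F w
        + (1/2) * (\<Sum>C\<in>Ksubsets R K. (blk_dist R \<nu> (st C) (Xi R F w))\<^sup>2)"
    unfolding lyapunov_def by (simp add: sum.distrib sum_subtractf sum_distrib_left N_def)
  also have "\<dots> \<le> N * (lyapunov R F w \<nu> y + p * (G + (1/2) * H + (1/2) * Dl))"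
    using g_avg dist_avg unfolding lyapunov_def \<nu>_def dist_y by (simp add: algebra_simps)
  also have "\<dots> \<le> N * (lyapunov R F w \<nu> y - p * (g_w R w y - g_star R F w + image_sqdist R w y x0))"
    using three_point by (simp add: algebra_simps)
  finally show ?thesis
    unfolding N_def p_def .
qed

lemma sum_Ksubsets_lyapunov_alg_step_le:
  fixes R K :: nat and F :: "nat \<Rightarrow> 'n::finite set \<Rightarrow> real" and w :: "'n \<Rightarrow> real"
  assumes subm: "\<forall>r<R. submodular (F r) \<and> F r {} = 0"
    and w: "\<forall>i. 0 < w i" and K: "1 \<le> K" "K \<le> R" and R2: "2 \<le> R"
    and yB: "y \<in> prod_base R F"
    and \<nu>: "\<forall>i. 0 < eso_weights R K F w i"
    and L2: "2 \<le> (\<Sum>i\<in>UNIV. w i) * (\<Sum>i\<in>UNIV. eso_weights R K F w i)"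
  defines "\<nu> \<equiv> eso_weights R K F w"
    and "L \<equiv> (\<Sum>i\<in>UNIV. w i) * (\<Sum>i\<in>UNIV. eso_weights R K F w i)"
  shows "(\<Sum>C\<in>Ksubsets R K. lyapunov R F w \<nu> (alg_step R F w \<nu> C y))
     \<le> real (card (Ksubsets R K)) * ((1 - real K / real R * (4 / (L + 2))) * lyapunov R F w \<nu> y)"
proof -
  have F0: "\<forall>r<R. F r {} = 0"
    using subm by simp
  have \<nu>_nonneg: "\<forall>i. 0 \<le> \<nu> i"
    using \<nu> by (simp add: \<nu>_def less_imp_le)
  obtain xs where "xs \<in> Xi R F w"
    using Xi_nonempty[OF w yB] by blast
  then obtain x0 where x0: "x0 \<in> Xi R F w" and x0_min: "\<forall>z\<in>Xi R F w. blk_sqdist R \<nu> y x0 \<le> blk_sqdist R \<nu> y z"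
    and dist_y: "(blk_dist R \<nu> y (Xi R F w))\<^sup>2 = blk_sqdist R \<nu> y x0"
    using blk_dist_Xi_attained[OF w \<nu>_nonneg] by blast
  define e where "e = g_w R w y - g_star R F w"
  define q where "q = image_sqdist R w y x0"
  define D where "D = (1/2) * blk_sqdist R \<nu> y x0"
  have "0 \<le> q" "q \<le> e"
    using image_sqdist_nonneg[OF w] image_sqdist_le_g_w_diff[OF w x0 yB] g_star_eq_Xi[OF x0]
    unfolding q_def e_def by simp_all
  moreover have "0 \<le> D"
    unfolding D_def using blk_sqdist_nonneg[OF \<nu>_nonneg] by simp
  moreover have "2 * D \<le> L * q"
    using blk_sqdist_Xi_le[OF subm w \<nu>_nonneg x0 yB] x0_min
    unfolding D_def q_def L_def \<nu>_def by fastforce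
  ultimately have "e + D - real K / real R * (e + q) \<le> (1 - real K / real R * (4 / (L + 2))) * (e + D)"
    using L2 by (intro contraction_arith) (simp_all add: L_def)
  moreover have "lyapunov R F w \<nu> y = e + D"
    unfolding lyapunov_def e_def D_def dist_y by simp
  moreover have "(\<Sum>C\<in>Ksubsets R K. lyapunov R F w \<nu> (alg_step R F w \<nu> C y))
      \<le> real (card (Ksubsets R K)) * (lyapunov R F w \<nu> y - real K / real R * (e + q))"
    using sum_Ksubsets_lyapunov_alg_step_le_gap[OF F0 w K R2 yB \<nu> x0 dist_y[unfolded \<nu>_def]]
    unfolding \<nu>_def[symmetric] e_def q_def .
  ultimately show ?thesis
    by (smt (verit) mult_left_mono of_nat_0_le_iff)
qed

lemma draw_seqs_0: "draw_seqs R K 0 = {[]}"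
  by (auto simp: draw_seqs_def)

lemma draw_seqs_Suc: "draw_seqs R K (Suc k) = (\<lambda>(C, Cs). C # Cs) ` (Ksubsets R K \<times> draw_seqs R K k)"
proof
  show "draw_seqs R K (Suc k) \<subseteq> (\<lambda>(C, Cs). C # Cs) ` (Ksubsets R K \<times> draw_seqs R K k)"
  proof
    fix xs assume "xs \<in> draw_seqs R K (Suc k)"
    then obtain C Cs where "xs = C # Cs" "length Cs = k" "C \<in> Ksubsets R K" "set Cs \<subseteq> Ksubsets R K"
      by (cases xs) (auto simp: draw_seqs_def)
    then show "xs \<in> (\<lambda>(C, Cs). C # Cs) ` (Ksubsets R K \<times> draw_seqs R K k)"
      by (force simp: draw_seqs_def)
  qed
qed (auto simp: draw_seqs_def)

lemma inj_on_Cons_draw_seqs: "inj_on (\<lambda>(C, Cs). C # Cs) (Ksubsets R K \<times> draw_seqs R K k)"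
  by (auto simp: inj_on_def)

lemma finite_draw_seqs: "finite (draw_seqs R K k)"
  by (induction k) (simp_all add: draw_seqs_0 draw_seqs_Suc finite_Ksubsets)

lemma card_draw_seqs: "card (draw_seqs R K k) = card (Ksubsets R K) ^ k"
  by (induction k) (simp_all add: draw_seqs_0 draw_seqs_Suc card_image[OF inj_on_Cons_draw_seqs] card_cartesian_product)

lemma sum_draw_seqs_Suc:
  "(\<Sum>Cs\<in>draw_seqs R K (Suc k). f Cs) = (\<Sum>C\<in>Ksubsets R K. \<Sum>Cs\<in>draw_seqs R K k. f (C # Cs))"
  unfolding draw_seqs_Suc sum.reindex[OF inj_on_Cons_draw_seqs]
  by (simp add: sum.cartesian_product case_prod_unfold)

lemma expectation_pmf_of_set_draw_seqs:
  assumes "K \<le> R"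
  shows "measure_pmf.expectation (pmf_of_set (draw_seqs R K k)) f
    = (\<Sum>Cs\<in>draw_seqs R K k. f Cs) / real (card (Ksubsets R K)) ^ k"
proof -
  have "card (Ksubsets R K) \<noteq> 0"
    using assms by (simp add: card_Ksubsets)
  then have "draw_seqs R K k \<noteq> {}"
    using card_draw_seqs[of R K k] by force
  then show ?thesis
    using integral_pmf_of_set[OF _ finite_draw_seqs] by (simp add: card_draw_seqs)
qed

lemma sum_draw_seqs_alg_iter_le:
  fixes \<Phi> :: "(nat \<Rightarrow> 'n::finite \<Rightarrow> real) \<Rightarrow> real" and B :: "(nat \<Rightarrow> 'n \<Rightarrow> real) set"
  assumes step: "\<And>y. y \<in> B \<Longrightarrow> (\<Sum>C\<in>Ksubsets R K. \<Phi> (alg_step R F w \<nu> C y)) \<le> real (card (Ksubsets R K)) * (\<rho> * \<Phi> y)"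
    and step_mem: "\<And>y C. y \<in> B \<Longrightarrow> C \<in> Ksubsets R K \<Longrightarrow> alg_step R F w \<nu> C y \<in> B"
    and \<rho>: "0 \<le> \<rho>" and y: "y \<in> B"
  shows "(\<Sum>Cs\<in>draw_seqs R K k. \<Phi> (alg_iter R F w \<nu> y Cs)) \<le> real (card (Ksubsets R K)) ^ k * (\<rho> ^ k * \<Phi> y)"
  using y
proof (induction k arbitrary: y)
  case 0
  then show ?case
    by (simp add: draw_seqs_0 alg_iter_def)
next
  case (Suc k)
  define N where "N = real (card (Ksubsets R K))"
  have "(\<Sum>Cs\<in>draw_seqs R K (Suc k). \<Phi> (alg_iter R F w \<nu> y Cs))
      = (\<Sum>C\<in>Ksubsets R K. \<Sum>Cs\<in>draw_seqs R K k. \<Phi> (alg_iter R F w \<nu> (alg_step R F w \<nu> C y) Cs))"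
    by (simp add: sum_draw_seqs_Suc alg_iter_def)
  also have "\<dots> \<le> (\<Sum>C\<in>Ksubsets R K. N ^ k * (\<rho> ^ k * \<Phi> (alg_step R F w \<nu> C y)))"
    using Suc.IH step_mem Suc.prems by (intro sum_mono) (auto simp: N_def)
  also have "\<dots> = N ^ k * \<rho> ^ k * (\<Sum>C\<in>Ksubsets R K. \<Phi> (alg_step R F w \<nu> C y))"
    by (simp add: sum_distrib_left mult.assoc)
  also have "\<dots> \<le> N ^ k * \<rho> ^ k * (N * (\<rho> * \<Phi> y))"
    using step[OF Suc.prems] \<rho> unfolding N_def by (intro mult_left_mono) auto
  also have "\<dots> = N ^ Suc k * (\<rho> ^ Suc k * \<Phi> y)"
    by (simp add: algebra_simps)
  finally show ?case
    unfolding N_def .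
qed

lemma prod_base_singleton_type:
  fixes F :: "nat \<Rightarrow> 'n::finite set \<Rightarrow> real"
  assumes "CARD('n) = 1" "y \<in> prod_base R F" "z \<in> prod_base R F"
  shows "y = z"
proof -
  obtain a :: 'n where a: "UNIV = {a}"
    using assms(1) card_1_singletonE by blast
  have "y r = z r" for r
  proof (cases "r < R")
    case True
    then have "sum (y r) UNIV = F r UNIV" "sum (z r) UNIV = F r UNIV"
      using assms(2,3) by (simp_all add: prod_base_def base_polytope_sum_UNIV)
    moreover have "sum (y r) UNIV = y r a" "sum (z r) UNIV = z r a"
      unfolding a by simp_all
    moreover have "x = a" for x
      using a by blast
    ultimately show ?thesis
      by (metis ext)
  qed (use assms(2,3) in \<open>auto simp: prod_base_def\<close>)
  then show ?thesis
    by auto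
qed

text \<open>With a single coordinate, \<open>B\<close> is a single point, so the bound holds trivially; this case
  is excluded from the main argument because it allows \<open>\<parallel>w\<parallel>\<^sub>1 \<parallel>\<nu>\<parallel>\<^sub>1 < 2\<close>.\<close>
lemma lyapunov_singleton_type:
  fixes F :: "nat \<Rightarrow> 'n::finite set \<Rightarrow> real"
  assumes "CARD('n) = 1" "\<forall>i. 0 < w i" "y \<in> prod_base R F"
  shows "lyapunov R F w \<nu> y = 0"
proof -
  obtain x where x: "x \<in> Xi R F w"
    using Xi_nonempty[OF assms(2,3)] by blast
  have "Xi R F w = {y}"
    using prod_base_singleton_type[OF assms(1)] x assms(3) by (auto simp: Xi_def)
  then show ?thesis
    using g_star_eq_Xi[of y R F w]
    by (simp add: lyapunov_def blk_dist_def blk_norm_def wnorm_def)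
qed

lemma two_le_sum_mult_sum:
  fixes w v :: "'n::finite \<Rightarrow> real"
  assumes c: "2 \<le> CARD('n)" and w: "\<forall>i. 0 < w i" and v: "\<forall>i. inverse (w i) \<le> v i"
  shows "2 \<le> (\<Sum>i\<in>UNIV. w i) * (\<Sum>i\<in>UNIV. v i)"
proof -
  obtain a b :: 'n where ab: "a \<noteq> b"
  proof -
    have "\<not> UNIV \<subseteq> {undefined :: 'n}"
      using c card_mono[of "{undefined :: 'n}" UNIV] by auto
    then show ?thesis
      using that by blast
  qed
  have wa: "0 < w a" "0 < w b"
    using w by auto
  have "w a + w b \<le> (\<Sum>i\<in>UNIV. w i)"
    using w ab sum_mono2[of UNIV "{a, b}" w] by (simp add: less_imp_le)
  moreover have "inverse (w a) + inverse (w b) \<le> (\<Sum>i\<in>UNIV. v i)"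
  proof -
    have "inverse (w a) + inverse (w b) \<le> v a + v b"
      using v by (simp add: add_mono)
    also have "\<dots> \<le> (\<Sum>i\<in>UNIV. v i)"
      using ab w v sum_mono2[of UNIV "{a, b}" v] by (fastforce intro: order_trans[OF less_imp_le[OF positive_imp_inverse_positive]])
    finally show ?thesis .
  qed
  moreover have "2 \<le> (w a + w b) * (inverse (w a) + inverse (w b))"
  proof -
    have "(w a + w b) * (inverse (w a) + inverse (w b)) = 2 + w a / w b + w b / w a"
      using wa by (simp add: field_simps)
    moreover have "0 \<le> w a / w b" "0 \<le> w b / w a"
      using wa by auto
    ultimately show ?thesis
      by linarith
  qed
  ultimately show ?thesis
    using wa by (smt (verit) mult_mono inverse_positive_iff_positive)
qed

lemma eso_weights_ge_inverse:
  assumes w: "\<forall>i. 0 < w i" and R2: "2 \<le> R" and K: "1 \<le> K" "K \<le> R" and mu1: "\<forall>i. 1 \<le> mu R F i"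
  shows "inverse (w i) \<le> eso_weights R K F w i"
proof -
  have q: "0 \<le> (real K - 1) / (real R - 1)" "(real K - 1) / (real R - 1) + (real R - real K) / (real R - 1) = 1"
    using K R2 by (simp_all add: add_divide_distrib[symmetric])
  then have "1 \<le> (real K - 1) / (real R - 1) * real (mu R F i) + (real R - real K) / (real R - 1)"
    using mult_left_mono[OF _ q(1), of 1 "real (mu R F i)"] mu1 by simp
  then show ?thesis
    unfolding eso_weights_def using w mult_left_mono[of 1 _ "inverse (w i)"] by (simp add: less_imp_le)
qed

lemma sum_draw_seqs_lyapunov_alg_iter_le:
  fixes R K :: nat and F :: "nat \<Rightarrow> 'n::finite set \<Rightarrow> real" and w :: "'n \<Rightarrow> real"
  assumes subm: "\<forall>r<R. submodular (F r) \<and> F r {} = 0"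
    and w: "\<forall>i. 0 < w i" and K: "1 \<le> K" "K \<le> R" and R2: "2 \<le> R" and y0: "y0 \<in> prod_base R F"
    and \<nu>: "\<forall>i. 0 < eso_weights R K F w i"
    and L2: "2 \<le> (\<Sum>i\<in>UNIV. w i) * (\<Sum>i\<in>UNIV. eso_weights R K F w i)"
  defines "\<nu> \<equiv> eso_weights R K F w"
    and "L \<equiv> (\<Sum>i\<in>UNIV. w i) * (\<Sum>i\<in>UNIV. eso_weights R K F w i)"
  shows "(\<Sum>Cs\<in>draw_seqs R K k. lyapunov R F w \<nu> (alg_iter R F w \<nu> y0 Cs))
    \<le> real (card (Ksubsets R K)) ^ k * ((1 - real K / real R * (4 / (L + 2))) ^ k * lyapunov R F w \<nu> y0)"
proof (rule sum_draw_seqs_alg_iter_le[where B = "prod_base R F"])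
  have "real K / real R * (4 / (L + 2)) \<le> 1 * 1"
    using L2 K(2) R2 unfolding L_def by (intro mult_mono) (auto simp: divide_le_eq)
  then show "0 \<le> 1 - real K / real R * (4 / (L + 2))"
    by simp
  show "alg_step R F w \<nu> C y \<in> prod_base R F" if "y \<in> prod_base R F" "C \<in> Ksubsets R K" for y C
    using alg_step_in_prod_base[OF that] \<nu> by (simp add: \<nu>_def)
qed (use sum_Ksubsets_lyapunov_alg_step_le[OF subm w K R2 _ \<nu> L2] y0 in \<open>simp_all add: \<nu>_def L_def\<close>)

lemma expected_lyapunov_alg_iter_le:
  fixes R K :: nat and F :: "nat \<Rightarrow> 'n::finite set \<Rightarrow> real" and w :: "'n \<Rightarrow> real"
  assumes subm: "\<forall>r<R. submodular (F r) \<and> F r {} = 0"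
    and w: "\<forall>i. 0 < w i" and R2: "2 \<le> R" and K: "1 \<le> K" "K \<le> R"
    and mu1: "\<forall>i. 1 \<le> mu R F i" and y0: "y0 \<in> prod_base R F"
  defines "\<nu> \<equiv> eso_weights R K F w"
    and "L \<equiv> (\<Sum>i\<in>UNIV. w i) * (\<Sum>i\<in>UNIV. eso_weights R K F w i)"
  shows "measure_pmf.expectation (pmf_of_set (draw_seqs R K k)) (\<lambda>Cs. lyapunov R F w \<nu> (alg_iter R F w \<nu> y0 Cs))
    \<le> (1 - real K / real R * (4 / (L + 2))) ^ k * lyapunov R F w \<nu> y0"
proof -
  have \<nu>_ge: "inverse (w i) \<le> \<nu> i" for i
    unfolding \<nu>_def using eso_weights_ge_inverse[OF w R2 K mu1] .
  then have \<nu>_pos: "\<forall>i. 0 < \<nu> i"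
    using w by (meson inverse_positive_iff_positive order_less_le_trans)
  have "0 < real (card (Ksubsets R K))"
    using K(2) by (simp add: card_Ksubsets)
  show ?thesis
  proof (cases "2 \<le> CARD('n)")
    case True
    then have "2 \<le> L"
      unfolding L_def using two_le_sum_mult_sum[OF _ w] \<nu>_ge by (simp add: \<nu>_def)
    then show ?thesis
      using sum_draw_seqs_lyapunov_alg_iter_le[OF subm w K R2 y0, of k] \<nu>_pos \<open>0 < real (card (Ksubsets R K))\<close>
      unfolding expectation_pmf_of_set_draw_seqs[OF K(2)] \<nu>_def L_def
      by (simp add: divide_le_eq mult.commute)
  next
    case False
    moreover have "0 < CARD('n)"
      by simp
    ultimately have "CARD('n) = 1"
      by linarith
    then have "lyapunov R F w \<nu> (alg_iter R F w \<nu> y0 Cs) = 0" if "Cs \<in> draw_seqs R K k" for Cs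
      using lyapunov_singleton_type[OF _ w] alg_iter_in_prod_base[OF y0 _ \<nu>_pos, of Cs K w] that
      by (simp add: draw_seqs_def)
    then show ?thesis
      unfolding expectation_pmf_of_set_draw_seqs[OF K(2)]
      using lyapunov_singleton_type[OF \<open>CARD('n) = 1\<close> w y0] by simp
  qed
qed

theorem mainTheorem17:
  fixes R K :: nat and F :: "nat \<Rightarrow> 'n::finite set \<Rightarrow> real"
    and w :: "'n \<Rightarrow> real" and y0 :: "nat \<Rightarrow> 'n \<Rightarrow> real" and k :: nat
  assumes subm: "\<forall>r<R. submodular (F r) \<and> F r {} = 0"
    and wpos: "\<forall>i. w i > 0"
    and R2: "R \<ge> 2" and K1: "1 \<le> K" and KR: "K \<le> R"
    and mu1: "\<forall>i. mu R F i \<ge> 1"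
    and y0B: "y0 \<in> prod_base R F"
  shows "let \<nu> = (\<lambda>i. inverse (w i) * ((real K - 1) / (real R - 1) * real (mu R F i)
                                    + (real R - real K) / (real R - 1)));
             \<Phi> = (\<lambda>y. g_w R w y - g_star R F w + (1/2) * (blk_dist R \<nu> y (Xi R F w))\<^sup>2)
         in measure_pmf.expectation (pmf_of_set (draw_seqs R K k))
              (\<lambda>Cs. \<Phi> (alg_iter R F w \<nu> y0 Cs))
            \<le> (1 - 4 * real K / (real R * ((\<Sum>i\<in>UNIV. \<bar>w i\<bar>) * (\<Sum>i\<in>UNIV. \<bar>\<nu> i\<bar>) + 2))) ^ k
              * \<Phi> y0"
proof -
  have \<nu>: "(\<lambda>i. inverse (w i) * ((real K - 1) / (real R - 1) * real (mu R F i)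
      + (real R - real K) / (real R - 1))) = eso_weights R K F w"
    by (simp add: eso_weights_def fun_eq_iff)
  have "0 < eso_weights R K F w i" for i
    using eso_weights_ge_inverse[OF wpos R2 K1 KR mu1, of i] wpos
    by (meson inverse_positive_iff_positive order_less_le_trans)
  then have "1 - 4 * real K / (real R * ((\<Sum>i\<in>UNIV. \<bar>w i\<bar>) * (\<Sum>i\<in>UNIV. \<bar>eso_weights R K F w i\<bar>) + 2))
      = 1 - real K / real R * (4 / ((\<Sum>i\<in>UNIV. w i) * (\<Sum>i\<in>UNIV. eso_weights R K F w i) + 2))"
    using wpos by (simp add: less_imp_le)
  then show ?thesis
    using expected_lyapunov_alg_iter_le[OF subm wpos R2 K1 KR mu1 y0B, of k]
    unfolding Let_def \<nu> lyapunov_def by simp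
qed

end
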